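(* Let $n\ge2$ and $\alpha\in\mathbb{C}$ with $\operatorname{Re}\alpha>(1-n)/2$. Then, with implicit constants depending only on $n,\alpha$, for all $\lambda\in\mathbb{R}$: (i) for all $t>0$, $|m^\alpha_t(\lambda)|\lesssim (1+t)\,e^{-\frac{n-1}{2}t}$; (ii) for all $0<t\le1$, $\big|\frac{\mathrm{d}}{\mathrm{d}\lambda}m^\alpha_t(\lambda)\big|\lesssim t$, and if in addition $|\lambda| t\ge1$, then $|m^\alpha_t(\lambda)|\lesssim (|\lambda| t)^{-(\operatorname{Re}\alpha+\frac{n-1}{2})}$.
   Context: For $t>0$, $\lambda\in\mathbb{R}$ and $\operatorname{Re}\alpha>(1-n)/2$, $$m^\alpha_t(\lambda)=2^{\frac{n-2}{2}+\alpha}\,\Gamma\!\left(\tfrac n2\right)\frac{e^{\alpha t}}{(e^t-1)^{2\alpha}}(\sinh t)^{\frac{2-n}{2}+1+\alpha}\,P^{\frac{2-n}{2}-\alpha}_{-\frac12+i\lambda}(\cosh t),$$ where $P^\mu_\nu$ is the associated Legendre function of the first kind on $(1,\infty)$; equivalently, with a constant $C_\alpha$, $P^{\frac{2-n}{2}-\alpha}_{-\frac12+i\lambda}(\cosh t)=C_\alpha(\sinh t)^{\frac{2-n}{2}-\alpha}\int_0^t(\cosh t-\cosh s)^{\alpha+\frac{n-3}{2}}\cos(\lambda s)\,\mathrm{d}s$. For $\alpha=0$, $m^0_t(\lambda)=\varphi_\lambda(t)$ is the elementary spherical function of $\mathbb{H}^n$. *)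

theory Defs
  imports "HOL-Analysis.Analysis"
begin

text \<open>Associated Legendre function of the first kind on (1,infinity), evaluated at cosh t,
  with degree -1/2 + i*lam and order mu, via the Mehler-Dirichlet type integral
  (valid for Re mu < 1/2):
  P^mu_{-1/2+i lam}(cosh t) = sqrt(2/pi) / Gamma(1/2 - mu) * (sinh t)^mu *
     int_0^t (cosh t - cosh s)^(-mu - 1/2) cos(lam s) ds.\<close>
definition legendreP_cosh :: "complex \<Rightarrow> real \<Rightarrow> real \<Rightarrow> complex" where
  "legendreP_cosh \<mu> lam t =
     complex_of_real (sqrt (2 / pi)) / Gamma (1/2 - \<mu>)
     * (complex_of_real (sinh t)) powr \<mu>
     * integral {0..t} (\<lambda>s. (complex_of_real (cosh t - cosh s)) powr (- \<mu> - 1/2)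
                              * complex_of_real (cos (lam * s)))"

definition mult_m :: "nat \<Rightarrow> complex \<Rightarrow> real \<Rightarrow> real \<Rightarrow> complex" where
  "mult_m n \<alpha> t lam =
     2 powr ((of_nat n - 2) / 2 + \<alpha>) * Gamma (of_nat n / 2)
     * exp (\<alpha> * of_real t) / (complex_of_real (exp t - 1)) powr (2 * \<alpha>)
     * (complex_of_real (sinh t)) powr ((2 - of_nat n) / 2 + \<alpha>)
     * legendreP_cosh ((2 - of_nat n) / 2 - \<alpha>) lam t"

end

theory Submission
  imports Defs "HOL-Complex_Analysis.Complex_Analysis"
begin

text \<open>With beta = alpha + (n - 3)/2 we have Re beta > -1, and m is an explicit prefactor c(t) times the
  Mehler integral int_0^t (cosh t - cosh s)^beta cos(lam s) ds; in half-angle variables |c(t)| is a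
  constant times (2 sinh(t/2))^(-1 - 2 Re beta) cosh(t/2)^(2 - n).
  Convexity of cosh gives cosh t - cosh s >= (t - s)/t (cosh t - 1), so the kernel is integrable with
  mass of order (cosh t - 1)^(Re beta) t. This gives (i), and differentiating under the integral sign
  costs one more factor s <= t.
  For the oscillatory bound put x0 = t - 1/(2 lam). The integral over [0, x0] is half the integral of
  (cosh t - cosh z)^beta e^(i lam z) over [-x0, x0], and Cauchy's theorem moves it to the other three
  sides of the rectangle of height t. There |cosh t - cosh z| is comparable to t (t - |Re z| + Im z)
  while e^(i lam z) decays like e^(-lam Im z). The remaining piece over [x0, t] has length
  1/(2 lam) and is bounded directly.\<close>

section \<open>Elementary inequalities\<close>

lemma sin_ge_half_self:
  assumes "0 \<le> y" "y \<le> 1"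
  shows "y / 2 \<le> sin (y::real)"
proof -
  have cos_1: "1/2 \<le> cos (1::real)"
    using cos_monotone_0_pi_le[of 1 "pi/3"] pi_gt3 by (simp add: cos_60)
  have "\<exists>D. ((\<lambda>x. sin x - x/2) has_real_derivative D) (at x) \<and> 0 \<le> D"
    if "0 \<le> x" "x \<le> y" for x
  proof (intro exI conjI)
    show "((\<lambda>x. sin x - x/2) has_real_derivative cos x - 1/2) (at x)"
      by (auto intro!: derivative_eq_intros)
    show "0 \<le> cos x - 1/2"
      using cos_1 cos_monotone_0_pi_le[of x 1] that assms pi_gt3 by linarith
  qed
  from DERIV_nonneg_imp_nondecreasing[OF assms(1) this] show ?thesis by simp
qed

lemma one_minus_cos_le:
  assumes "0 \<le> y"
  shows "1 - cos y \<le> (y::real)^2 / 2"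
proof -
  have "\<exists>D. ((\<lambda>x. x^2/2 - 1 + cos x) has_real_derivative D) (at x) \<and> 0 \<le> D" if "0 \<le> x" for x
  proof (intro exI conjI)
    show "((\<lambda>x. x^2/2 - 1 + cos x) has_real_derivative x - sin x) (at x)"
      by (auto intro!: derivative_eq_intros)
    show "0 \<le> x - sin x" using sin_x_le_x that by simp
  qed
  from DERIV_nonneg_imp_nondecreasing[OF assms this] show ?thesis by simp
qed

lemma one_minus_cos_ge:
  assumes "0 \<le> y" "y \<le> 1"
  shows "(y::real)^2 / 4 \<le> 1 - cos y"
proof -
  have "\<exists>D. ((\<lambda>x. 1 - cos x - x^2/4) has_real_derivative D) (at x) \<and> 0 \<le> D"
    if "0 \<le> x" "x \<le> y" for x
  proof (intro exI conjI)
    show "((\<lambda>x. 1 - cos x - x^2/4) has_real_derivative sin x - x/2) (at x)"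
      by (auto intro!: derivative_eq_intros)
    show "0 \<le> sin x - x/2" using sin_ge_half_self[of x] that assms by simp
  qed
  from DERIV_nonneg_imp_nondecreasing[OF assms(1) this] show ?thesis by simp
qed

lemma sinh_ge_self: "0 \<le> x \<Longrightarrow> x \<le> sinh (x::real)"
  using real_le_x_sinh[of x] by (simp add: sinh_def exp_minus)

lemma cosh_le_2:
  assumes "\<bar>x\<bar> \<le> 1"
  shows "cosh (x::real) \<le> 2"
proof -
  have "cosh x \<le> cosh 1"
    using assms cosh_real_nonneg_le_iff[of "\<bar>x\<bar>" 1] by simp
  also have "cosh (1::real) \<le> 2"
    using exp_le exp_le_one_iff[of "-1::real"] by (simp add: cosh_def del: exp_le_one_iff)
  finally show ?thesis .
qed

lemma sinh_le_twice_self: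
  assumes "0 \<le> x" "x \<le> 1"
  shows "sinh (x::real) \<le> 2 * x"
proof -
  have "\<exists>D. ((\<lambda>x. 2*x - sinh x) has_real_derivative D) (at y) \<and> 0 \<le> D"
    if "0 \<le> y" "y \<le> x" for y
  proof (intro exI conjI)
    show "((\<lambda>x. 2*x - sinh x) has_real_derivative 2 - cosh y) (at y)"
      by (auto intro!: derivative_eq_intros)
    show "0 \<le> 2 - cosh y" using cosh_le_2[of y] that assms by simp
  qed
  from DERIV_nonneg_imp_nondecreasing[OF assms(1) this] show ?thesis by simp
qed

lemma abs_sin_diff_le: "\<bar>sin (a::real) - sin b\<bar> \<le> \<bar>a - b\<bar>"
proof -
  have "\<bar>sin a - sin b\<bar> = 2 * \<bar>sin ((a - b)/2)\<bar> * \<bar>cos ((a + b)/2)\<bar>"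
    by (simp add: sin_diff_sin abs_mult)
  also have "\<dots> \<le> 2 * \<bar>(a - b)/2\<bar> * 1"
    by (intro mult_mono abs_sin_x_le_abs_x) auto
  finally show ?thesis by simp
qed

lemma cos_taylor_remainder_le: "\<bar>cos (x + d) - cos x + d * sin x\<bar> \<le> (d::real)^2"
proof -
  define S where "S = {-\<bar>d\<bar>..\<bar>d\<bar>}"
  have "norm ((\<lambda>u. cos (x + u) - cos x + u * sin x) d - (\<lambda>u. cos (x + u) - cos x + u * sin x) 0)
        \<le> \<bar>d\<bar> * norm (d - 0)"
  proof (rule field_differentiable_bound[where S=S and f'="\<lambda>u. sin x - sin (x + u)"])
    fix z assume "z \<in> S"
    show "((\<lambda>u. cos (x + u) - cos x + u * sin x) has_field_derivative sin x - sin (x + z)) (at z within S)"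
      by (auto intro!: derivative_eq_intros)
    show "norm (sin x - sin (x + z)) \<le> \<bar>d\<bar>"
      using abs_sin_diff_le[of x "x + z"] \<open>z \<in> S\<close> by (auto simp: S_def)
  qed (auto simp: S_def)
  thus ?thesis by (simp add: power2_eq_square abs_mult)
qed

lemma cosh_diff_ge_linear:
  assumes "0 < t" "t/2 \<le> s" "s \<le> (t::real)"
  shows "t/2 * (t - s) \<le> cosh t - cosh s"
proof -
  have "\<exists>D. ((\<lambda>x. cosh x - t/2 * x) has_real_derivative D) (at x) \<and> 0 \<le> D"
    if "s \<le> x" "x \<le> t" for x
  proof (intro exI conjI)
    show "((\<lambda>x. cosh x - t/2 * x) has_real_derivative sinh x - t/2) (at x)"
      by (auto intro!: derivative_eq_intros)
    show "0 \<le> sinh x - t/2" using sinh_ge_self[of x] that assms by simp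
  qed
  from DERIV_nonneg_imp_nondecreasing[OF assms(3) this] show ?thesis
    by (simp add: field_simps)
qed

lemma cosh_diff_le_linear:
  assumes "0 \<le> s" "s \<le> t" "t \<le> (1::real)"
  shows "cosh t - cosh s \<le> 2 * t * (t - s)"
proof -
  have "\<exists>D. ((\<lambda>x. 2*t*x - cosh x) has_real_derivative D) (at x) \<and> 0 \<le> D"
    if "s \<le> x" "x \<le> t" for x
  proof (intro exI conjI)
    show "((\<lambda>x. 2*t*x - cosh x) has_real_derivative 2*t - sinh x) (at x)"
      by (auto intro!: derivative_eq_intros)
    show "0 \<le> 2*t - sinh x" using sinh_le_twice_self[of x] that assms by simp
  qed
  from DERIV_nonneg_imp_nondecreasing[OF assms(2) this] show ?thesis
    by (simp add: algebra_simps)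
qed

lemma cosh_diff_ge_chord:
  assumes "0 < t" "0 \<le> s" "s \<le> (t::real)"
  shows "(t - s) / t * (cosh t - 1) \<le> cosh t - cosh s"
proof -
  define \<theta> where "\<theta> = s / t"
  have \<theta>: "0 \<le> \<theta>" "\<theta> \<le> 1" "s = \<theta> * t" using assms by (auto simp: \<theta>_def)
  have "exp s \<le> (1 - \<theta>) * exp 0 + \<theta> * exp t"
    using convex_onD[OF exp_convex \<theta>(1,2), of 0 t] \<theta>(3) by simp
  moreover have "exp (-s) \<le> (1 - \<theta>) * exp 0 + \<theta> * exp (-t)"
    using convex_onD[OF exp_convex \<theta>(1,2), of 0 "-t"] \<theta>(3) by simp
  ultimately have "cosh s \<le> (1 - \<theta>) + \<theta> * cosh t"
    by (simp add: cosh_def algebra_simps)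
  hence "t * cosh s \<le> t * ((1 - \<theta>) + \<theta> * cosh t)" using assms by simp
  also have "\<dots> = (t - s) + s * cosh t" using assms by (simp add: \<theta>_def field_simps)
  finally have "(t - s) * (cosh t - 1) \<le> t * (cosh t - cosh s)" by (simp add: algebra_simps)
  thus ?thesis using assms by (simp add: divide_le_eq mult.commute)
qed

lemma powr_le_of_ratio_bounded:
  fixes d u M b :: real
  assumes "0 < u" "1 \<le> M" "u / M \<le> d" "d \<le> M * u"
  shows "d powr b \<le> M powr \<bar>b\<bar> * u powr b"
proof (cases "b \<ge> 0")
  case True
  have "d powr b \<le> (M * u) powr b"
    using assms True by (intro powr_mono2) (auto intro: order.trans[rotated])
  thus ?thesis using True by (simp add: powr_mult)
next
  case False
  have "d powr b \<le> (u / M) powr b" using assms False by (intro powr_mono2') auto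
  thus ?thesis using False assms by (simp add: powr_divide powr_minus divide_simps)
qed

lemma has_integral_powr_to_endpoint:
  assumes "c > (-1::real)" "a \<le> t"
  shows "((\<lambda>s. (t - s) powr c) has_integral (t - a) powr (c + 1) / (c + 1)) {a..t}"
proof -
  have "((\<lambda>x. x powr c) has_integral (t - a) powr (c + 1) / (c + 1)) {0..t - a}"
    using has_integral_powr_from_0[of c "t - a"] assms by auto
  hence "((\<lambda>x. (-x) powr c) has_integral (t - a) powr (c + 1) / (c + 1)) {a - t..0}"
    using has_integral_reflect_real[of "\<lambda>x. x powr c" _ "t - a" 0] by simp
  hence "((\<lambda>x. (- (1 *\<^sub>R x + - t)) powr c) has_integral
          (t - a) powr (c + 1) / (c + 1) /\<^sub>R 1 ^ DIM(real))
           (cbox ((a - t - - t) /\<^sub>R 1) ((0 - - t) /\<^sub>R 1))"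
    by (subst has_integral_affinity_iff) (auto simp: cbox_interval)
  thus ?thesis by (simp add: cbox_interval)
qed

lemma has_integral_exp_neg_linear:
  assumes "0 < (c::real)" "0 \<le> T"
  shows "((\<lambda>y. exp (- (c * y))) has_integral (1 - exp (- (c * T))) / c) {0..T}"
proof -
  have "((\<lambda>y. exp (- (c * y))) has_integral
         (- exp (- (c * T)) / c) - (- exp (- (c * 0)) / c)) {0..T}"
  proof (rule fundamental_theorem_of_calculus)
    fix x :: real
    have "((\<lambda>y. - exp (- (c * y)) / c) has_real_derivative exp (- (c * x))) (at x)"
      using assms by (auto intro!: derivative_eq_intros)
    thus "((\<lambda>y. - exp (- (c * y)) / c) has_vector_derivative exp (- (c * x))) (at x within {0..T})"
      by (simp add: has_real_derivative_iff_has_vector_derivative has_vector_derivative_at_within)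
  qed (use assms in simp)
  thus ?thesis by (simp add: diff_divide_distrib)
qed

lemma powr_le_exp_mult:
  assumes "0 < p" "0 \<le> x"
  shows "x powr p \<le> p powr p * exp (x::real)"
proof -
  have "x \<le> p * exp (x / p)"
    using exp_ge_add_one_self[of "x/p"] assms by (simp add: field_simps)
  hence "x powr p \<le> (p * exp (x / p)) powr p" using assms by (intro powr_mono2) auto
  also have "\<dots> = p powr p * exp (x / p) powr p" by (rule powr_mult)
  also have "exp (x / p) powr p = exp x" using assms by (simp add: powr_def)
  finally show ?thesis .
qed

lemma exp_neg_le_powr:
  assumes "0 < p" "0 < (x::real)"
  shows "exp (- x) \<le> p powr p * x powr (- p)"
  using powr_le_exp_mult[OF assms(1), of x] assms
  by (simp add: exp_minus powr_minus field_simps)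

lemma one_plus_powr_le_exp:
  "\<exists>K>0. \<forall>u\<ge>0. (1 + u) powr (b::real) \<le> K * exp (u/4)"
proof (cases "b \<le> 0")
  case True
  have "(1 + u) powr b \<le> 1 * exp (u/4)" if "0 \<le> u" for u :: real
    using powr_mono2'[of b 1 "1 + u"] True that by (simp add: order.trans[of _ 1])
  thus ?thesis by (intro exI[of _ 1]) auto
next
  case False
  have "(1 + u) powr b \<le> (4 powr b * b powr b * exp (1/4)) * exp (u/4)" if "0 \<le> u" for u :: real
  proof -
    have "(1 + u) powr b = (4 * ((1 + u)/4)) powr b" by (rule arg_cong[of _ _ "\<lambda>x. x powr b"]) simp
    also have "\<dots> = 4 powr b * ((1 + u)/4) powr b" by (rule powr_mult)
    also have "((1 + u)/4) powr b \<le> b powr b * exp ((1 + u)/4)"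
      using False that by (intro powr_le_exp_mult) auto
    also have "exp ((1 + u)/4) = exp (1/4) * exp (u/4)"
      by (simp flip: exp_add add: add_divide_distrib)
    finally show ?thesis using False by (simp add: mult_ac)
  qed
  thus ?thesis using False by (intro exI[of _ "4 powr b * b powr b * exp (1/4)"]) auto
qed

section \<open>The Mehler integral\<close>

definition mehler_kernel :: "complex \<Rightarrow> real \<Rightarrow> real \<Rightarrow> complex" where
  "mehler_kernel \<beta> t s = complex_of_real (cosh t - cosh s) powr \<beta>"

definition mehler_integral :: "complex \<Rightarrow> real \<Rightarrow> real \<Rightarrow> complex" where
  "mehler_integral \<beta> t l = integral {0..t} (\<lambda>s. mehler_kernel \<beta> t s * of_real (cos (l * s)))"

definition mehler_integral_deriv :: "complex \<Rightarrow> real \<Rightarrow> real \<Rightarrow> complex" where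
  "mehler_integral_deriv \<beta> t l =
     integral {0..t} (\<lambda>s. mehler_kernel \<beta> t s * of_real (- (s * sin (l * s))))"

definition kernel_mass :: "complex \<Rightarrow> real \<Rightarrow> real" where
  "kernel_mass \<beta> t = (cosh t - 1) powr Re \<beta> * t / (min (Re \<beta>) 0 + 1)"

lemma norm_mehler_kernel:
  assumes "0 \<le> s" "s \<le> t"
  shows "norm (mehler_kernel \<beta> t s) = (cosh t - cosh s) powr Re \<beta>"
proof -
  have "cosh s \<le> cosh t" using assms by (subst cosh_real_nonneg_le_iff) auto
  thus ?thesis unfolding mehler_kernel_def by (subst norm_powr_real_powr) auto
qed

lemma norm_mehler_kernel_le:
  assumes "0 < t" "0 \<le> s" "s \<le> t"
  shows "norm (mehler_kernel \<beta> t s) \<le> (cosh t - 1) powr Re \<beta> * ((t - s)/t) powr min (Re \<beta>) 0"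
proof (cases "s = t")
  case True
  thus ?thesis by (simp add: mehler_kernel_def)
next
  case False
  have lower: "(t - s)/t * (cosh t - 1) \<le> cosh t - cosh s"
    using cosh_diff_ge_chord assms by auto
  have pos: "0 < (t - s)/t * (cosh t - 1)"
    using False assms cosh_real_nonneg_less_iff[of 0 t] by simp
  have upper: "cosh t - cosh s \<le> cosh t - 1" using cosh_real_ge_1[of s] by simp
  show ?thesis
  proof (cases "0 \<le> Re \<beta>")
    case True
    have "(cosh t - cosh s) powr Re \<beta> \<le> (cosh t - 1) powr Re \<beta>"
      using True lower upper pos by (intro powr_mono2) auto
    thus ?thesis using True False assms by (simp add: norm_mehler_kernel)
  next
    case False
    have "(cosh t - cosh s) powr Re \<beta> \<le> ((t - s)/t * (cosh t - 1)) powr Re \<beta>"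
      using False lower pos by (intro powr_mono2') auto
    also have "\<dots> = ((t - s)/t) powr Re \<beta> * (cosh t - 1) powr Re \<beta>"
      by (rule powr_mult)
    finally show ?thesis using False assms by (simp add: norm_mehler_kernel min_def mult.commute)
  qed
qed

lemma continuous_on_mehler_kernel: "continuous_on {0..<t} (mehler_kernel \<beta> t)"
  unfolding mehler_kernel_def
proof (intro continuous_intros)
  have gap: "0 < cosh t - cosh s" if "s \<in> {0..<t}" for s
    using that cosh_real_nonneg_less_iff[of s t] by auto
  show "{0..<t} \<subseteq> {s. 0 \<le> Re (complex_of_real (cosh t - cosh s)) \<or> Im (complex_of_real (cosh t - cosh s)) \<noteq> 0}"
    using gap by force
  show "\<And>s. s \<in> {0..<t} \<Longrightarrow> complex_of_real (cosh t - cosh s) = 0 \<Longrightarrow> 0 < Re \<beta>"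
    using gap by force
qed

lemma has_integral_chord_powr:
  assumes "0 < t" "-1 < (c::real)"
  shows "((\<lambda>s. ((t - s)/t) powr c) has_integral t / (c + 1)) {0..t}"
proof -
  have integrand: "(\<lambda>s. ((t - s)/t) powr c) = (\<lambda>s. t powr (-c) * (t - s) powr c)"
  proof
    fix s
    have "((t - s)/t) powr c = (t - s) powr c / t powr c" by (rule powr_divide)
    thus "((t - s)/t) powr c = t powr (-c) * (t - s) powr c"
      by (simp add: powr_minus divide_inverse mult.commute)
  qed
  have total: "t / (c + 1) = t powr (-c) * (t powr (c + 1) / (c + 1))"
    using assms by (simp add: powr_add powr_minus field_simps)
  have "((\<lambda>s. (t - s) powr c) has_integral t powr (c + 1) / (c + 1)) {0..t}"
    using has_integral_powr_to_endpoint[of c 0 t] assms by simp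
  from has_integral_mult_right[OF this, of "t powr (-c)"]
  show ?thesis unfolding integrand total .
qed

lemma mehler_kernel_mult_le_majorant:
  assumes "0 < t" "\<And>x. x \<in> {0..t} \<Longrightarrow> norm (g x) \<le> B" "s \<in> {0..t}"
  shows "norm (mehler_kernel \<beta> t s * g s)
           \<le> B * (cosh t - 1) powr Re \<beta> * ((t - s)/t) powr min (Re \<beta>) 0"
proof -
  have "norm (g 0) \<le> B" using assms by simp
  hence "0 \<le> B" using norm_ge_zero order.trans by blast
  have "norm (mehler_kernel \<beta> t s * g s)
        \<le> ((cosh t - 1) powr Re \<beta> * ((t - s)/t) powr min (Re \<beta>) 0) * B"
    unfolding norm_mult using assms \<open>0 \<le> B\<close>
    by (intro mult_mono norm_mehler_kernel_le) auto
  thus ?thesis by (simp add: mult_ac)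
qed

lemma mehler_kernel_mult_integrable:
  assumes "0 < t" "-1 < Re \<beta>" "continuous_on {0..t} g" "\<And>s. s \<in> {0..t} \<Longrightarrow> norm (g s) \<le> B"
  shows "(\<lambda>s. mehler_kernel \<beta> t s * g s) integrable_on {0..t}"
proof -
  let ?c = "min (Re \<beta>) 0"
  have dominated: "norm (mehler_kernel \<beta> t s * g s)
                     \<le> B * (cosh t - 1) powr Re \<beta> * ((t - s)/t) powr ?c" if "s \<in> {0..t}" for s
    using mehler_kernel_mult_le_majorant[of t g B s \<beta>] assms that by simp
  have "(\<lambda>s. ((t - s)/t) powr ?c) integrable_on {0..t}"
    using has_integral_chord_powr[of t ?c] assms by (auto intro: has_integral_integrable)
  hence "(\<lambda>s. (B * (cosh t - 1) powr Re \<beta>) * ((t - s)/t) powr ?c) integrable_on {0..t}"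
    by (rule integrable_on_mult_right)
  hence majorant: "(\<lambda>s. B * (cosh t - 1) powr Re \<beta> * ((t - s)/t) powr ?c) integrable_on {0<..<t}"
    by (simp add: integrable_on_Icc_iff_Ioo)
  have "continuous_on {0<..<t} (\<lambda>s. mehler_kernel \<beta> t s * g s)"
    by (intro continuous_on_mult continuous_on_subset[OF continuous_on_mehler_kernel]
          continuous_on_subset[OF assms(3)]) auto
  hence "(\<lambda>s. mehler_kernel \<beta> t s * g s) integrable_on {0<..<t}"
    using dominated
    by (intro measurable_bounded_by_integrable_imp_integrable[OF _ majorant]
          continuous_imp_measurable_on_sets_lebesgue) auto
  thus ?thesis by (simp add: integrable_on_Icc_iff_Ioo)
qed

lemma norm_integral_mehler_kernel_mult_le:
  assumes "0 < t" "-1 < Re \<beta>" "continuous_on {0..t} g" "\<And>s. s \<in> {0..t} \<Longrightarrow> norm (g s) \<le> B"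
  shows "norm (integral {0..t} (\<lambda>s. mehler_kernel \<beta> t s * g s)) \<le> B * kernel_mass \<beta> t"
proof -
  let ?c = "min (Re \<beta>) 0"
  have "((\<lambda>s. B * (cosh t - 1) powr Re \<beta> * ((t - s)/t) powr ?c)
                    has_integral B * (cosh t - 1) powr Re \<beta> * (t / (?c + 1))) {0..t}"
    using has_integral_chord_powr[of t ?c] assms by (intro has_integral_mult_right) auto
  moreover have "B * (cosh t - 1) powr Re \<beta> * (t / (?c + 1)) = B * kernel_mass \<beta> t"
    by (simp add: kernel_mass_def)
  ultimately have majorant: "((\<lambda>s. B * (cosh t - 1) powr Re \<beta> * ((t - s)/t) powr ?c)
                    has_integral B * kernel_mass \<beta> t) {0..t}" by simp
  have "norm (integral {0..t} (\<lambda>s. mehler_kernel \<beta> t s * g s))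
        \<le> integral {0..t} (\<lambda>s. B * (cosh t - 1) powr Re \<beta> * ((t - s)/t) powr ?c)"
  proof (rule integral_norm_bound_integral)
    show "(\<lambda>s. mehler_kernel \<beta> t s * g s) integrable_on {0..t}"
      by (rule mehler_kernel_mult_integrable[OF assms])
    show "(\<lambda>s. B * (cosh t - 1) powr Re \<beta> * ((t - s)/t) powr ?c) integrable_on {0..t}"
      using majorant by blast
    show "norm (mehler_kernel \<beta> t s * g s) \<le> B * (cosh t - 1) powr Re \<beta> * ((t - s)/t) powr ?c"
      if "s \<in> {0..t}" for s
      using mehler_kernel_mult_le_majorant[of t g B s \<beta>] assms that by simp
  qed
  also have "\<dots> = B * kernel_mass \<beta> t" by (rule integral_unique[OF majorant])
  finally show ?thesis .
qed

lemma mehler_integral_norm_le: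
  assumes "0 < t" "-1 < Re \<beta>"
  shows "norm (mehler_integral \<beta> t l) \<le> kernel_mass \<beta> t"
proof -
  have "norm (mehler_integral \<beta> t l) \<le> 1 * kernel_mass \<beta> t"
    unfolding mehler_integral_def
    by (rule norm_integral_mehler_kernel_mult_le[OF assms]) (auto intro!: continuous_intros)
  thus ?thesis by simp
qed

lemma norm_s_sin_le:
  assumes "s \<in> {0..t}"
  shows "norm (complex_of_real (- (s * sin (l * s)))) \<le> t"
proof -
  have "\<bar>s\<bar> * \<bar>sin (l * s)\<bar> \<le> t * 1" using assms by (intro mult_mono) auto
  thus ?thesis by (simp only: norm_of_real norm_minus_cancel abs_minus_cancel abs_mult)
qed

lemma mehler_integral_deriv_norm_le:
  assumes "0 < t" "-1 < Re \<beta>"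
  shows "norm (mehler_integral_deriv \<beta> t l) \<le> t * kernel_mass \<beta> t"
  unfolding mehler_integral_deriv_def
  by (rule norm_integral_mehler_kernel_mult_le[OF assms]) (intro continuous_intros, erule norm_s_sin_le)

lemma mehler_integral_second_order:
  assumes "0 < t" "-1 < Re \<beta>"
  shows "norm (mehler_integral \<beta> t y - mehler_integral \<beta> t l - (y - l) *\<^sub>R mehler_integral_deriv \<beta> t l)
           \<le> (y - l)^2 * t^2 * kernel_mass \<beta> t"
proof -
  define g where "g s = complex_of_real (cos (l * s + (y - l) * s) - cos (l * s) + (y - l) * s * sin (l * s))" for s
  have cos_int: "((\<lambda>s. mehler_kernel \<beta> t s * of_real (cos (k * s))) has_integral mehler_integral \<beta> t k) {0..t}" for k
    unfolding mehler_integral_def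
    by (intro integrable_integral mehler_kernel_mult_integrable[OF assms, of _ 1]) (auto intro!: continuous_intros)
  have sin_int: "((\<lambda>s. mehler_kernel \<beta> t s * of_real (- (s * sin (l * s))))
                   has_integral mehler_integral_deriv \<beta> t l) {0..t}"
    unfolding mehler_integral_deriv_def
    by (intro integrable_integral mehler_kernel_mult_integrable[OF assms, of _ t])
       (intro continuous_intros, erule norm_s_sin_le)
  have "((\<lambda>s. mehler_kernel \<beta> t s * g s) has_integral
           mehler_integral \<beta> t y - mehler_integral \<beta> t l - (y - l) *\<^sub>R mehler_integral_deriv \<beta> t l) {0..t}"
  proof -
    have "mehler_kernel \<beta> t s * g s = mehler_kernel \<beta> t s * of_real (cos (y * s))
            - mehler_kernel \<beta> t s * of_real (cos (l * s))
            - (y - l) *\<^sub>R (mehler_kernel \<beta> t s * of_real (- (s * sin (l * s))))" for s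
      by (simp add: g_def scaleR_conv_of_real algebra_simps)
    thus ?thesis by (simp only: has_integral_diff has_integral_cmul cos_int sin_int)
  qed
  moreover have "norm (integral {0..t} (\<lambda>s. mehler_kernel \<beta> t s * g s)) \<le> ((y - l)^2 * t^2) * kernel_mass \<beta> t"
  proof (rule norm_integral_mehler_kernel_mult_le[OF assms])
    show "continuous_on {0..t} g" unfolding g_def by (intro continuous_intros)
    fix s assume s: "s \<in> {0..t}"
    have "norm (g s) \<le> ((y - l) * s)^2"
      unfolding g_def norm_of_real by (rule cos_taylor_remainder_le)
    also have "\<dots> \<le> (y - l)^2 * t^2"
      using s by (auto simp: power_mult_distrib intro!: mult_left_mono power_mono)
    finally show "norm (g s) \<le> (y - l)^2 * t^2" .
  qed
  ultimately show ?thesis by (simp add: integral_unique)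
qed

lemma has_vector_derivative_of_quadratic_remainder:
  fixes f :: "real \<Rightarrow> 'a::real_normed_vector"
  assumes "\<And>y. norm (f y - f x - (y - x) *\<^sub>R D) \<le> M * (y - x)^2"
  shows "(f has_vector_derivative D) (at x)"
  unfolding has_vector_derivative_def has_derivative_at2
proof (intro conjI bounded_linear_scaleR_left)
  have bound: "norm ((1 / norm (y - x)) *\<^sub>R (f y - (f x + (y - x) *\<^sub>R D))) \<le> \<bar>y - x\<bar> * M" for y
  proof (cases "y = x")
    case False
    have "norm ((1 / norm (y - x)) *\<^sub>R (f y - (f x + (y - x) *\<^sub>R D)))
          = norm (f y - f x - (y - x) *\<^sub>R D) / \<bar>y - x\<bar>"
      by (simp add: diff_diff_add)
    also have "\<dots> \<le> M * (y - x)^2 / \<bar>y - x\<bar>"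
      using assms[of y] by (intro divide_right_mono) auto
    also have "M * (y - x)^2 = (\<bar>y - x\<bar> * M) * \<bar>y - x\<bar>"
      by (metis abs_mult_self_eq mult.commute mult.left_commute power2_eq_square)
    also have "\<bar>y - x\<bar> * M * \<bar>y - x\<bar> / \<bar>y - x\<bar> = \<bar>y - x\<bar> * M"
      using False by simp
    finally show ?thesis .
  qed simp
  have lim: "((\<lambda>y. \<bar>y - x\<bar> * M) \<longlongrightarrow> 0) (at x)"
    by (rule tendsto_eq_intros refl | simp)+
  show "((\<lambda>y. (1 / norm (y - x)) *\<^sub>R (f y - (f x + (y - x) *\<^sub>R D))) \<longlongrightarrow> 0) (at x)"
    by (rule Lim_null_comparison[OF always_eventually lim]) (use bound in blast)
qed

lemma mehler_integral_has_vector_derivative: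
  assumes "0 < t" "-1 < Re \<beta>"
  shows "(mehler_integral \<beta> t has_vector_derivative mehler_integral_deriv \<beta> t l) (at l)"
  using mehler_integral_second_order[OF assms]
  by (intro has_vector_derivative_of_quadratic_remainder[where M = "t^2 * kernel_mass \<beta> t"])
     (simp add: mult_ac)

section \<open>Shifting the contour\<close>

definition mehler_integrand :: "complex \<Rightarrow> real \<Rightarrow> real \<Rightarrow> complex \<Rightarrow> complex" where
  "mehler_integrand \<beta> t l z = (complex_of_real (cosh t) - cosh z) powr \<beta> * exp (\<i> * of_real l * z)"

text \<open>Because 3/2 < pi/2, the real part of cosh z stays below cosh t on this box, so the
  integrand never meets the branch cut of powr.\<close>
definition mehler_box :: "real \<Rightarrow> complex set" where
  "mehler_box t = {z. Re z > -t} \<inter> {z. Re z < t} \<inter> {z. Im z > -1} \<inter> {z. Im z < 3/2}"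

lemma Re_cosh_complex: "Re (cosh z) = cosh (Re z) * cos (Im z)"
proof -
  have "Re (exp (-z)) = exp (-Re z) * cos (Im z)" by (simp only: Re_exp) simp
  thus ?thesis unfolding cosh_def by (simp add: Re_exp algebra_simps)
qed

lemma Im_cosh_complex: "Im (cosh z) = sinh (Re z) * sin (Im z)"
proof -
  have "Im (exp (-z)) = - (exp (-Re z) * sin (Im z))" by (simp only: Im_exp) simp
  thus ?thesis unfolding cosh_def sinh_def by (simp add: Im_exp algebra_simps)
qed

lemma cosh_complex_of_real: "cosh (complex_of_real x) = complex_of_real (cosh x)"
  by (simp add: cosh_def complex_eq_iff Re_exp Im_exp exp_minus)

lemma Re_cosh_gap:
  "Re (complex_of_real (cosh t) - cosh (Complex x y)) = (cosh t - cosh x) + cosh x * (1 - cos y)"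
  by (simp add: Re_cosh_complex algebra_simps)

lemma abs_Im_cosh_gap:
  "0 \<le> sin y \<Longrightarrow> \<bar>Im (complex_of_real (cosh t) - cosh (Complex x y))\<bar> = sinh \<bar>x\<bar> * sin y"
  by (simp add: Im_cosh_complex abs_mult)

lemma mehler_integrand_of_real:
  "mehler_integrand \<beta> t l (complex_of_real s) = mehler_kernel \<beta> t s * exp (\<i> * of_real (l * s))"
  by (simp add: mehler_integrand_def mehler_kernel_def cosh_complex_of_real mult.assoc)

lemma norm_mehler_integrand_le:
  "norm (mehler_integrand \<beta> t l z)
     \<le> norm (complex_of_real (cosh t) - cosh z) powr Re \<beta> * exp (\<bar>Im \<beta>\<bar> * pi) * exp (- (l * Im z))"
proof -
  define w where "w = complex_of_real (cosh t) - cosh z"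
  have "\<bar>Im \<beta> * Arg w\<bar> \<le> \<bar>Im \<beta>\<bar> * pi"
    using Arg_bounded[of w] by (simp add: abs_mult mult_left_mono abs_le_iff)
  hence "norm (w powr \<beta>) \<le> norm w powr Re \<beta> * exp (\<bar>Im \<beta>\<bar> * pi)"
    by (simp add: norm_powr_complex mult_left_mono)
  moreover have "norm (exp (\<i> * of_real l * z)) = exp (- (l * Im z))" by (simp add: norm_exp_eq_Re)
  ultimately show ?thesis
    unfolding mehler_integrand_def norm_mult w_def[symmetric] by (simp add: mult_right_mono)
qed

lemma convex_mehler_box: "convex (mehler_box t)"
  unfolding mehler_box_def
  by (intro convex_Int convex_halfspace_Re_gt convex_halfspace_Re_lt convex_halfspace_Im_gt convex_halfspace_Im_lt)

lemma open_mehler_box: "open (mehler_box t)"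
  unfolding mehler_box_def
  by (intro open_Int open_halfspace_Re_gt open_halfspace_Re_lt open_halfspace_Im_gt open_halfspace_Im_lt)

lemma Re_cosh_gap_pos:
  assumes "z \<in> mehler_box t"
  shows "0 < Re (complex_of_real (cosh t) - cosh z)"
proof -
  have "0 < cos (Im z)" using assms pi_gt3 by (intro cos_gt_zero_pi) (auto simp: mehler_box_def)
  moreover have "cosh (Re z) < cosh t"
    using assms cosh_real_nonneg_less_iff[of "\<bar>Re z\<bar>" t] by (auto simp: mehler_box_def)
  moreover have "cosh (Re z) * cos (Im z) \<le> cosh (Re z)"
    using mult_left_le[of "cos (Im z)" "cosh (Re z)"] by simp
  ultimately have "cosh (Re z) * cos (Im z) < cosh t" by linarith
  thus ?thesis by (simp add: Re_cosh_complex)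
qed

lemma holomorphic_on_mehler_integrand: "mehler_integrand \<beta> t l holomorphic_on mehler_box t"
  unfolding mehler_integrand_def
proof (intro holomorphic_intros analytic_imp_holomorphic analytic_intros)
  fix z assume "z \<in> mehler_box t"
  thus "complex_of_real (cosh t) - cosh z \<notin> \<real>\<^sub>\<le>\<^sub>0"
    using Re_cosh_gap_pos[of z t] by (auto simp: complex_nonpos_Reals_iff)
qed

lemma cosh_gap_vertical_Re_Im_bounds:
  assumes t: "0 < t" "t \<le> 1" and e: "0 < e" "e \<le> t/2"
    and x: "\<bar>x\<bar> = t - e" and y: "0 \<le> y" "y \<le> t"
  defines "w \<equiv> complex_of_real (cosh t) - cosh (Complex x y)"
  shows "t/2 * e \<le> Re w" "Re w \<le> 2 * t * e + t * y"
    and "t * y / 4 \<le> \<bar>Im w\<bar>" "\<bar>Im w\<bar> \<le> 2 * t * y"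
proof -
  define x0 where "x0 = t - e"
  have x0: "t/2 \<le> x0" "x0 < t" using t e by (auto simp: x0_def)
  have cosh_x: "cosh x = cosh x0" by (metis cosh_real_abs x x0_def)
  have Re_w: "Re w = (cosh t - cosh x0) + cosh x0 * (1 - cos y)"
    by (simp only: w_def Re_cosh_gap cosh_x)
  have Im_w: "\<bar>Im w\<bar> = sinh x0 * sin y"
    using abs_Im_cosh_gap[of y t x] y t pi_gt3 sin_ge_zero[of y] by (simp add: w_def x x0_def)
  have cosh_gap: "t/2 * e \<le> cosh t - cosh x0" "cosh t - cosh x0 \<le> 2 * t * e"
    using cosh_diff_ge_linear[of t x0] cosh_diff_le_linear[of x0 t] x0 t by (simp_all add: x0_def)
  have cosh_x0: "1 \<le> cosh x0" "cosh x0 \<le> 2" using cosh_real_ge_1 cosh_le_2[of x0] x0 t by auto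
  have cos_y: "0 \<le> 1 - cos y" "1 - cos y \<le> y^2/2" using one_minus_cos_le[of y] y by auto
  have sin_y: "y/2 \<le> sin y" "sin y \<le> y" using sin_ge_half_self[of y] sin_x_le_x[of y] y t by auto
  have sinh_x0: "x0 \<le> sinh x0" "sinh x0 \<le> 2 * x0"
    using sinh_ge_self[of x0] sinh_le_twice_self[of x0] x0 t by auto
  show "t/2 * e \<le> Re w"
    using Re_w cosh_gap cosh_x0 cos_y mult_nonneg_nonneg[of "cosh x0" "1 - cos y"] by linarith
  have "cosh x0 * (1 - cos y) \<le> 2 * (y^2/2)" using cosh_x0 cos_y by (intro mult_mono) auto
  also have "\<dots> \<le> t * y" using y by (simp add: power2_eq_square mult_right_mono)
  finally show "Re w \<le> 2 * t * e + t * y" using Re_w cosh_gap by linarith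
  have "t * y \<le> (2 * x0) * y" using x0 y by (intro mult_right_mono) auto
  hence "t * y / 4 \<le> x0 * (y/2)" by simp
  also have "\<dots> \<le> sinh x0 * sin y" using sinh_x0 sin_y x0 y t by (intro mult_mono) auto
  finally show "t * y / 4 \<le> \<bar>Im w\<bar>" using Im_w by simp
  have "sinh x0 * sin y \<le> (2 * t) * y" using sinh_x0 sin_y x0 y by (intro mult_mono) auto
  thus "\<bar>Im w\<bar> \<le> 2 * t * y" using Im_w by simp
qed

lemma cosh_gap_vertical_bounds:
  assumes t: "0 < t" "t \<le> 1" and e: "0 < e" "e \<le> t/2"
    and x: "\<bar>x\<bar> = t - e" and y: "0 \<le> y" "y \<le> t"
  shows "t * (e + y) / 8 \<le> norm (complex_of_real (cosh t) - cosh (Complex x y))"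
    and "norm (complex_of_real (cosh t) - cosh (Complex x y)) \<le> 8 * (t * (e + y))"
proof -
  define w where "w = complex_of_real (cosh t) - cosh (Complex x y)"
  note bounds = cosh_gap_vertical_Re_Im_bounds[OF assms, folded w_def]
  have "t * (e + y) = t * e + t * y" by (simp add: algebra_simps)
  moreover have "0 < t * e" using t e by simp
  ultimately have "t * (e + y) / 8 \<le> (Re w + \<bar>Im w\<bar>) / 2"
    using bounds by (simp add: algebra_simps)
  also have "\<dots> \<le> norm w"
    using abs_Re_le_cmod[of w] abs_Im_le_cmod[of w] abs_ge_self[of "Re w"] by argo
  finally show "t * (e + y) / 8 \<le> norm (complex_of_real (cosh t) - cosh (Complex x y))"
    by (simp add: w_def)
  have "norm w \<le> \<bar>Re w\<bar> + \<bar>Im w\<bar>" by (rule cmod_le)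
  also have "\<dots> \<le> 8 * (t * (e + y))"
    using bounds t e y mult_nonneg_nonneg[of t e] mult_nonneg_nonneg[of t y]
    by (simp add: algebra_simps)
  finally show "norm (complex_of_real (cosh t) - cosh (Complex x y)) \<le> 8 * (t * (e + y))"
    by (simp add: w_def)
qed

lemma cosh_gap_top_bounds:
  assumes t: "0 < t" "t \<le> 1" and x: "\<bar>x\<bar> \<le> t"
  shows "t^2 / 8 \<le> norm (complex_of_real (cosh t) - cosh (Complex x t))"
    and "norm (complex_of_real (cosh t) - cosh (Complex x t)) \<le> 8 * t^2"
proof -
  define w where "w = complex_of_real (cosh t) - cosh (Complex x t)"
  have sin_t: "0 \<le> sin t" "sin t \<le> t" using t pi_gt3 sin_ge_zero[of t] sin_x_le_x[of t] by auto
  have Re_w: "Re w = (cosh t - cosh x) + cosh x * (1 - cos t)" unfolding w_def by (rule Re_cosh_gap)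
  have Im_w: "\<bar>Im w\<bar> = sinh \<bar>x\<bar> * sin t" using abs_Im_cosh_gap[of t t x] sin_t by (simp add: w_def)
  have cosh_x: "cosh x \<le> cosh t" using cosh_real_nonneg_le_iff[of "\<bar>x\<bar>" t] x t by simp
  have cosh_x_bounds: "1 \<le> cosh x" "cosh x \<le> 2" using cosh_real_ge_1 cosh_le_2[of x] x t by auto
  have cos_t: "t^2/4 \<le> 1 - cos t" "1 - cos t \<le> t^2/2"
    using one_minus_cos_le[of t] one_minus_cos_ge[of t] t by auto
  have "1 * (t^2/4) \<le> cosh x * (1 - cos t)" using cosh_x_bounds cos_t by (intro mult_mono) auto
  hence Re_lower: "t^2/4 \<le> Re w" using Re_w cosh_x by linarith
  thus "t^2 / 8 \<le> norm (complex_of_real (cosh t) - cosh (Complex x t))"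
    using abs_Re_le_cmod[of w] t by (simp add: w_def)
  have "cosh x * (1 - cos t) \<le> 2 * (t^2/2)" using cosh_x_bounds cos_t by (intro mult_mono) auto
  moreover have "cosh t - 1 \<le> 2 * t * t" using cosh_diff_le_linear[of 0 t] t by simp
  ultimately have Re_upper: "Re w \<le> 3 * t^2" using Re_w cosh_x_bounds by (simp add: power2_eq_square)
  have "sinh \<bar>x\<bar> * sin t \<le> (2 * t) * t"
    using sinh_le_twice_self[of "\<bar>x\<bar>"] x t sin_t by (intro mult_mono) auto
  hence Im_upper: "\<bar>Im w\<bar> \<le> 2 * t^2" using Im_w by (simp add: power2_eq_square)
  have "norm w \<le> \<bar>Re w\<bar> + \<bar>Im w\<bar>" by (rule cmod_le)
  also have "\<dots> \<le> 8 * t^2" using Re_lower Re_upper Im_upper by (simp add: power2_eq_square)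
  finally show "norm (complex_of_real (cosh t) - cosh (Complex x t)) \<le> 8 * t^2"
    by (simp add: w_def)
qed

lemma norm_mehler_integrand_vertical_le:
  assumes t: "0 < t" "t \<le> 1" and l: "0 < l" "1 \<le> l * t"
    and x: "\<bar>x\<bar> = t - 1/(2*l)" and y: "0 \<le> y" "y \<le> t"
    and K: "\<And>u. 0 \<le> u \<Longrightarrow> (1 + u) powr Re \<beta> \<le> K * exp (u/4)"
  shows "norm (mehler_integrand \<beta> t l (Complex x y))
           \<le> exp (\<bar>Im \<beta>\<bar> * pi) * 8 powr \<bar>Re \<beta>\<bar> * K * t powr Re \<beta> * (2 * l) powr (- Re \<beta>)
             * exp (- (l/2 * y))"
proof -
  define b where "b = Re \<beta>"
  define e where "e = 1/(2*l)"
  define w where "w = complex_of_real (cosh t) - cosh (Complex x y)"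
  have e: "0 < e" "e \<le> t/2" using t l by (auto simp: e_def field_simps)
  have "norm w powr b \<le> 8 powr \<bar>b\<bar> * (t * (e + y)) powr b"
    using cosh_gap_vertical_bounds[OF t e, of x y] x y e t
    by (intro powr_le_of_ratio_bounded) (auto simp: w_def e_def intro!: mult_pos_pos add_pos_nonneg)
  also have "t * (e + y) = t * (e * (1 + 2 * l * y))" using l by (simp add: e_def field_simps)
  also have "(t * (e * (1 + 2 * l * y))) powr b = t powr b * (e powr b * (1 + 2 * l * y) powr b)"
    by (simp add: powr_mult)
  also have "e powr b = (2 * l) powr (- b)" by (simp add: e_def powr_minus powr_divide inverse_eq_divide)
  also have "(1 + 2 * l * y) powr b \<le> K * exp (2 * l * y / 4)"
    using K[of "2 * l * y"] l y by (simp add: b_def)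
  finally have "norm w powr b \<le> 8 powr \<bar>b\<bar> * (t powr b * ((2 * l) powr (- b) * (K * exp (2 * l * y / 4))))"
    by (simp add: mult_left_mono)
  hence "norm (mehler_integrand \<beta> t l (Complex x y))
         \<le> 8 powr \<bar>b\<bar> * (t powr b * ((2 * l) powr (- b) * (K * exp (2 * l * y / 4))))
           * exp (\<bar>Im \<beta>\<bar> * pi) * exp (- (l * y))"
    using norm_mehler_integrand_le[of \<beta> t l "Complex x y"]
    by (simp add: w_def b_def) (meson exp_ge_zero mult_right_mono mult_nonneg_nonneg order_trans)
  also have "\<dots> = exp (\<bar>Im \<beta>\<bar> * pi) * 8 powr \<bar>b\<bar> * K * t powr b * (2 * l) powr (- b)
                    * (exp (2 * l * y / 4) * exp (- (l * y)))"
    by (simp add: mult_ac)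
  also have "exp (2 * l * y / 4) * exp (- (l * y)) = exp (- (l/2 * y))"
    by (simp flip: exp_add add: field_simps)
  finally show ?thesis by (simp add: b_def)
qed

lemma norm_contour_integral_vertical_le:
  assumes "f contour_integrable_on linepath (Complex x 0) (Complex x t)" "0 < t" "0 < c"
    and "\<And>y. y \<in> {0..t} \<Longrightarrow> norm (f (Complex x y)) \<le> A * exp (- (c * y))"
  shows "norm (contour_integral (linepath (Complex x 0) (Complex x t)) f) \<le> A / c"
proof -
  have "norm (f (Complex x 0)) \<le> A" using assms(2) assms(4)[of 0] by simp
  hence "0 \<le> A" using norm_ge_zero order_trans by blast
  have "(f has_contour_integral contour_integral (linepath (Complex x 0) (Complex x t)) f)
          (linepath (Complex x 0) (Complex x t))"
    using assms(1) by (rule has_contour_integral_integral)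
  hence vertical: "((\<lambda>y. f (Complex x y)) has_integral
                     - \<i> * contour_integral (linepath (Complex x 0) (Complex x t)) f) {0..t}"
    using assms(2) by (subst (asm) has_contour_integral_linepath_same_Re_iff) auto
  have "norm (contour_integral (linepath (Complex x 0) (Complex x t)) f)
        = norm (integral {0..t} (\<lambda>y. f (Complex x y)))"
    using vertical by (simp add: integral_unique norm_mult)
  also have "\<dots> \<le> integral {0..t} (\<lambda>y. A * exp (- (c * y)))"
  proof (rule integral_norm_bound_integral)
    show "(\<lambda>y. f (Complex x y)) integrable_on {0..t}" using vertical by blast
    show "(\<lambda>y. A * exp (- (c * y))) integrable_on {0..t}"
      using has_integral_exp_neg_linear[of c t] assms(2,3) by (intro integrable_on_mult_right) auto
  qed (rule assms(4))
  also have "\<dots> = A * ((1 - exp (- (c * t))) / c)"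
    using has_integral_exp_neg_linear[of c t] assms(2,3) by (simp add: integral_unique has_integral_mult_right)
  also have "\<dots> \<le> A * (1 / c)"
    using \<open>0 \<le> A\<close> assms(3) by (intro mult_left_mono divide_right_mono) auto
  finally show ?thesis by simp
qed

lemma mehler_vertical_side_bound:
  "\<exists>C. \<forall>t l x. 0 < t \<and> t \<le> 1 \<and> 0 < l \<and> 1 \<le> l * t \<and> \<bar>x\<bar> = t - 1/(2*l) \<longrightarrow>
     norm (contour_integral (linepath (Complex x 0) (Complex x t)) (mehler_integrand \<beta> t l))
       \<le> C * t powr Re \<beta> * l powr (- (Re \<beta> + 1))"
proof -
  obtain K where K: "\<And>u. 0 \<le> u \<Longrightarrow> (1 + u) powr Re \<beta> \<le> K * exp (u/4)"
    using one_plus_powr_le_exp[of "Re \<beta>"] by blast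
  define C where "C = 2 * exp (\<bar>Im \<beta>\<bar> * pi) * 8 powr \<bar>Re \<beta>\<bar> * K * 2 powr (- Re \<beta>)"
  have "norm (contour_integral (linepath (Complex x 0) (Complex x t)) (mehler_integrand \<beta> t l))
          \<le> C * t powr Re \<beta> * l powr (- (Re \<beta> + 1))"
    if t: "0 < t" "t \<le> 1" and l: "0 < l" "1 \<le> l * t" and x: "\<bar>x\<bar> = t - 1/(2*l)" for t l x
  proof -
    have "\<bar>x\<bar> < t" using x l by simp
    hence "closed_segment (Complex x 0) (Complex x t) \<subseteq> mehler_box t"
      using t pi_gt3 by (auto simp: closed_segment_same_Re closed_segment_eq_real_ivl mehler_box_def)
    hence "mehler_integrand \<beta> t l contour_integrable_on linepath (Complex x 0) (Complex x t)"
      by (intro contour_integrable_holomorphic_simple[OF holomorphic_on_mehler_integrand open_mehler_box]) auto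
    hence "norm (contour_integral (linepath (Complex x 0) (Complex x t)) (mehler_integrand \<beta> t l))
           \<le> exp (\<bar>Im \<beta>\<bar> * pi) * 8 powr \<bar>Re \<beta>\<bar> * K * t powr Re \<beta> * (2 * l) powr (- Re \<beta>) / (l/2)"
      using norm_mehler_integrand_vertical_le[OF t l x _ _ K] t l
      by (intro norm_contour_integral_vertical_le) auto
    also have "\<dots> = C * t powr Re \<beta> * (l powr (- Re \<beta>) / l)"
      using l by (simp add: C_def powr_mult field_simps)
    also have "l powr (- Re \<beta>) = l powr (- (Re \<beta> + 1)) * l powr 1"
      by (simp only: powr_add[symmetric]) simp
    also have "l powr (- (Re \<beta> + 1)) * l powr 1 / l = l powr (- (Re \<beta> + 1))" using l by simp
    finally show ?thesis .
  qed
  thus ?thesis by blast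
qed

lemma norm_mehler_integrand_top_le:
  assumes "0 < t" "t \<le> 1" "\<bar>x\<bar> \<le> t"
  shows "norm (mehler_integrand \<beta> t l (Complex x t))
           \<le> exp (\<bar>Im \<beta>\<bar> * pi) * 8 powr \<bar>Re \<beta>\<bar> * (t * t) powr Re \<beta> * exp (- (l * t))"
proof -
  have gap: "norm (complex_of_real (cosh t) - cosh (Complex x t)) powr Re \<beta> \<le> 8 powr \<bar>Re \<beta>\<bar> * (t * t) powr Re \<beta>"
    using cosh_gap_top_bounds[OF assms] assms
    by (intro powr_le_of_ratio_bounded) (auto simp: power2_eq_square)
  have "norm (mehler_integrand \<beta> t l (Complex x t))
        \<le> norm (complex_of_real (cosh t) - cosh (Complex x t)) powr Re \<beta> * exp (\<bar>Im \<beta>\<bar> * pi) * exp (- (l * t))"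
    using norm_mehler_integrand_le[of \<beta> t l "Complex x t"] by simp
  also have "\<dots> \<le> (8 powr \<bar>Re \<beta>\<bar> * (t * t) powr Re \<beta>) * exp (\<bar>Im \<beta>\<bar> * pi) * exp (- (l * t))"
    using gap by (intro mult_right_mono) auto
  finally show ?thesis by (simp add: mult_ac)
qed

lemma square_powr_mult_exp_neg_le:
  fixes t l b :: real
  assumes "0 < t" "0 < l" "-1 < b"
  shows "(t * t) powr b * t * exp (- (l * t)) \<le> (b + 1) powr (b + 1) * t powr b * l powr (- (b + 1))"
proof -
  have "(t * t) powr b * t * exp (- (l * t))
        \<le> (t * t) powr b * t * ((b + 1) powr (b + 1) * (l * t) powr (- (b + 1)))"
    using exp_neg_le_powr[of "b + 1" "l * t"] assms by (intro mult_left_mono) auto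
  also have "\<dots> = (b + 1) powr (b + 1) * l powr (- (b + 1)) * t powr b * (t powr b * t powr 1 * t powr (- (b + 1)))"
    using assms by (simp add: powr_mult mult_ac)
  also have "t powr b * t powr 1 * t powr (- (b + 1)) = t powr (b + 1 + - (b + 1))"
    by (simp only: powr_add)
  finally show ?thesis using assms by (simp add: mult_ac)
qed

lemma mehler_top_side_bound:
  assumes "-1 < Re \<beta>"
  shows "\<exists>C. \<forall>t l x0. 0 < t \<and> t \<le> 1 \<and> 0 < l \<and> 1 \<le> l * t \<and> 0 \<le> x0 \<and> x0 < t \<longrightarrow>
     norm (contour_integral (linepath (Complex x0 t) (Complex (-x0) t)) (mehler_integrand \<beta> t l))
       \<le> C * t powr Re \<beta> * l powr (- (Re \<beta> + 1))"
proof -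
  define b where "b = Re \<beta>"
  define C where "C = 2 * exp (\<bar>Im \<beta>\<bar> * pi) * 8 powr \<bar>b\<bar> * (b + 1) powr (b + 1)"
  have "norm (contour_integral (linepath (Complex x0 t) (Complex (-x0) t)) (mehler_integrand \<beta> t l))
          \<le> C * t powr b * l powr (- (b + 1))"
    if t: "0 < t" "t \<le> 1" and l: "0 < l" "1 \<le> l * t" and x0: "0 \<le> x0" "x0 < t" for t l x0
  proof -
    define B where "B = exp (\<bar>Im \<beta>\<bar> * pi) * 8 powr \<bar>b\<bar> * (t * t) powr b * exp (- (l * t))"
    have segment: "closed_segment (Complex x0 t) (Complex (-x0) t) = {z. Im z = t \<and> Re z \<in> {-x0..x0}}"
      using x0 by (auto simp: closed_segment_same_Im closed_segment_eq_real_ivl)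
    have "closed_segment (Complex x0 t) (Complex (-x0) t) \<subseteq> mehler_box t"
      unfolding segment using t x0 pi_gt3 by (auto simp: mehler_box_def)
    hence integrable: "mehler_integrand \<beta> t l contour_integrable_on linepath (Complex x0 t) (Complex (-x0) t)"
      by (intro contour_integrable_holomorphic_simple[OF holomorphic_on_mehler_integrand open_mehler_box]) auto
    have pointwise: "norm (mehler_integrand \<beta> t l z) \<le> B"
      if "z \<in> closed_segment (Complex x0 t) (Complex (-x0) t)" for z
    proof -
      have "z = Complex (Re z) t" "\<bar>Re z\<bar> \<le> t"
        using that x0 unfolding segment by (auto simp: complex_eq_iff)
      thus ?thesis using norm_mehler_integrand_top_le[OF t, of "Re z" \<beta> l] by (simp add: B_def b_def)
    qed
    have "norm (contour_integral (linepath (Complex x0 t) (Complex (-x0) t)) (mehler_integrand \<beta> t l))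
          \<le> B * norm (Complex (-x0) t - Complex x0 t)"
      by (rule contour_integral_bound_linepath[OF integrable _ pointwise]) (auto simp: B_def)
    also have "norm (Complex (-x0) t - Complex x0 t) = 2 * x0"
    proof -
      have "Complex (-x0) t - Complex x0 t = complex_of_real (- (2 * x0))" by (simp add: complex_eq_iff)
      thus ?thesis using x0 by simp
    qed
    also have "B * (2 * x0) \<le> B * (2 * t)"
      using x0 by (intro mult_left_mono) (auto simp: B_def)
    also have "\<dots> = 2 * exp (\<bar>Im \<beta>\<bar> * pi) * 8 powr \<bar>b\<bar> * ((t * t) powr b * t * exp (- (l * t)))"
      by (simp add: B_def mult_ac)
    also have "\<dots> \<le> C * t powr b * l powr (- (b + 1))"
      using square_powr_mult_exp_neg_le[OF t(1) l(1), of b] assms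
      by (simp add: C_def b_def mult_left_mono mult_ac)
    finally show ?thesis .
  qed
  thus ?thesis by (auto simp: b_def)
qed

lemma rectpath_side_integrals_sum:
  assumes holo: "F holomorphic_on S" and S: "convex S" "open S" "cbox a1 a3 \<subseteq> S"
    and corners: "Re a1 \<le> Re a3" "Im a1 \<le> Im a3"
  defines "a2 \<equiv> Complex (Re a3) (Im a1)" and "a4 \<equiv> Complex (Re a1) (Im a3)"
  shows "contour_integral (linepath a1 a2) F + contour_integral (linepath a2 a3) F
           + contour_integral (linepath a3 a4) F = contour_integral (linepath a1 a4) F"
proof -
  have in_box: "a1 \<in> cbox a1 a3" "a2 \<in> cbox a1 a3" "a3 \<in> cbox a1 a3" "a4 \<in> cbox a1 a3"
    using corners by (auto simp: a2_def a4_def in_cbox_complex_iff)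
  have segment: "closed_segment p q \<subseteq> S" if "p \<in> cbox a1 a3" "q \<in> cbox a1 a3" for p q
    using closed_segment_subset[of p "cbox a1 a3" q] that S(3) by auto
  have integrable: "F contour_integrable_on linepath p q" if "p \<in> cbox a1 a3" "q \<in> cbox a1 a3" for p q
    using segment[OF that] by (intro contour_integrable_holomorphic_simple[OF holo S(2)]) auto
  have "(F has_contour_integral 0) (rectpath a1 a3)"
  proof (rule Cauchy_theorem_convex_simple[OF holo S(1)])
    show "path_image (rectpath a1 a3) \<subseteq> S"
      using path_image_rectpath_subset_cbox[of a1 a3] corners S(3) by auto
  qed auto
  hence "contour_integral (rectpath a1 a3) F = 0" by (rule contour_integral_unique)
  moreover have "rectpath a1 a3 = linepath a1 a2 +++ linepath a2 a3 +++ linepath a3 a4 +++ linepath a4 a1"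
    by (simp add: rectpath_def Let_def a2_def a4_def)
  moreover have "contour_integral (linepath a4 a1) F = - contour_integral (linepath a1 a4) F"
    using holomorphic_on_imp_continuous_on[OF holo] segment[OF in_box(4,1)]
    by (intro contour_integral_reverse_linepath) (rule continuous_on_subset)
  ultimately show ?thesis
    by (simp add: integrable in_box contour_integrable_joinI valid_path_join add.assoc)
       (simp add: algebra_simps)
qed

lemma norm_integral_real_segment_le_sides:
  assumes t: "0 < t" "t \<le> 1" and x0: "0 < x0" "x0 < t"
  shows "norm (integral {-x0..x0} (\<lambda>s. mehler_integrand \<beta> t l (complex_of_real s)))
         \<le> norm (contour_integral (linepath (Complex x0 0) (Complex x0 t)) (mehler_integrand \<beta> t l))
          + norm (contour_integral (linepath (Complex x0 t) (Complex (-x0) t)) (mehler_integrand \<beta> t l))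
          + norm (contour_integral (linepath (Complex (-x0) 0) (Complex (-x0) t)) (mehler_integrand \<beta> t l))"
proof -
  define I\<^sub>1 I\<^sub>2 I\<^sub>3 where
    "I\<^sub>1 = contour_integral (linepath (Complex x0 0) (Complex x0 t)) (mehler_integrand \<beta> t l)" and
    "I\<^sub>2 = contour_integral (linepath (Complex x0 t) (Complex (-x0) t)) (mehler_integrand \<beta> t l)" and
    "I\<^sub>3 = contour_integral (linepath (Complex (-x0) 0) (Complex (-x0) t)) (mehler_integrand \<beta> t l)"
  have box: "cbox (Complex (-x0) 0) (Complex x0 t) \<subseteq> mehler_box t"
    using x0 t pi_gt3 by (auto simp: mehler_box_def in_cbox_complex_iff)
  have "Re (Complex (-x0) 0) \<le> Re (Complex x0 t)" "Im (Complex (-x0) 0) \<le> Im (Complex x0 t)"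
    using x0 t by auto
  from rectpath_side_integrals_sum[OF holomorphic_on_mehler_integrand convex_mehler_box
      open_mehler_box box this]
  have "contour_integral (linepath (Complex (-x0) 0) (Complex x0 0)) (mehler_integrand \<beta> t l)
        = I\<^sub>3 - I\<^sub>1 - I\<^sub>2"
    by (simp add: I\<^sub>1_def I\<^sub>2_def I\<^sub>3_def algebra_simps)
  moreover have "contour_integral (linepath (Complex (-x0) 0) (Complex x0 0)) (mehler_integrand \<beta> t l)
                 = integral {-x0..x0} (\<lambda>s. mehler_integrand \<beta> t l (complex_of_real s))"
  proof -
    have "Complex (-x0) 0 = complex_of_real (-x0)" "Complex x0 0 = complex_of_real x0"
      by (simp_all add: complex_eq_iff)
    thus ?thesis using x0 by (simp add: contour_integral_linepath_Reals_eq)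
  qed
  moreover have "norm (I\<^sub>3 - I\<^sub>1 - I\<^sub>2) \<le> norm I\<^sub>1 + norm I\<^sub>2 + norm I\<^sub>3"
    using norm_triangle_ineq4[of "I\<^sub>3 - I\<^sub>1" I\<^sub>2] norm_triangle_ineq4[of I\<^sub>3 I\<^sub>1] by linarith
  ultimately show ?thesis by (simp add: I\<^sub>1_def I\<^sub>2_def I\<^sub>3_def)
qed

lemma integral_mehler_integrand_symmetric:
  assumes "0 < x0" "x0 < t"
  shows "integral {-x0..x0} (\<lambda>s. mehler_integrand \<beta> t l (complex_of_real s))
         = 2 * integral {0..x0} (\<lambda>s. mehler_kernel \<beta> t s * complex_of_real (cos (l * s)))"
proof -
  define g where "g s = mehler_integrand \<beta> t l (complex_of_real s)" for s
  have "complex_of_real ` {-x0..x0} \<subseteq> mehler_box t" using assms by (auto simp: mehler_box_def)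
  with holomorphic_on_imp_continuous_on[OF holomorphic_on_mehler_integrand]
  have "continuous_on (complex_of_real ` {-x0..x0}) (mehler_integrand \<beta> t l)"
    by (rule continuous_on_subset)
  hence "continuous_on {-x0..x0} (mehler_integrand \<beta> t l \<circ> complex_of_real)"
    by (intro continuous_on_compose continuous_intros)
  hence "continuous_on {-x0..x0} g" by (simp add: g_def o_def)
  hence full: "g integrable_on {-x0..x0}" by (rule integrable_continuous_interval)
  hence integrable: "g integrable_on {-x0..0}" "g integrable_on {0..x0}"
    using assms by (auto intro: integrable_on_subinterval)
  have "integral {-x0..x0} g = integral {-x0..0} g + integral {0..x0} g"
    using full assms by (intro Henstock_Kurzweil_Integration.integral_combine[symmetric]) auto
  also have "integral {-x0..0} g = integral {0..x0} (\<lambda>s. g (-s))"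
    using Henstock_Kurzweil_Integration.integral_reflect_real[where f = "\<lambda>s. g (-s)" and a = 0 and b = x0] by simp
  also have "integral {0..x0} (\<lambda>s. g (-s)) + integral {0..x0} g = integral {0..x0} (\<lambda>s. g (-s) + g s)"
    using integrable Henstock_Kurzweil_Integration.integrable_reflect_real[where f = g and a = "-x0" and b = 0]
    by (simp add: integral_add)
  also have "(\<lambda>s. g (-s) + g s) = (\<lambda>s. 2 * (mehler_kernel \<beta> t s * complex_of_real (cos (l * s))))"
  proof
    fix s
    have "g (-s) + g s = mehler_kernel \<beta> t s
            * (exp (\<i> * of_real (l * s)) + exp (- (\<i> * of_real (l * s))))"
      unfolding g_def mehler_integrand_of_real by (simp add: mehler_kernel_def algebra_simps)
    also have "exp (\<i> * of_real (l * s)) + exp (- (\<i> * of_real (l * s))) = 2 * complex_of_real (cos (l * s))"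
      by (simp add: cos_exp_eq flip: cos_of_real)
    finally show "g (-s) + g s = 2 * (mehler_kernel \<beta> t s * complex_of_real (cos (l * s)))" by simp
  qed
  finally show ?thesis by (simp add: g_def)
qed

lemma norm_mehler_kernel_near_endpoint_le:
  assumes "t \<le> 1" "t/2 \<le> s" "s \<le> t"
  shows "norm (mehler_kernel \<beta> t s) \<le> 2 powr \<bar>Re \<beta>\<bar> * t powr Re \<beta> * (t - s) powr Re \<beta>"
proof (cases "s = t")
  case True
  thus ?thesis by (simp add: mehler_kernel_def)
next
  case False
  hence s: "0 \<le> s" "s < t" using assms by auto
  have "(cosh t - cosh s) powr Re \<beta> \<le> 2 powr \<bar>Re \<beta>\<bar> * (t * (t - s)) powr Re \<beta>"
  proof (rule powr_le_of_ratio_bounded)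
    show "0 < t * (t - s)" using s by simp
    show "t * (t - s) / 2 \<le> cosh t - cosh s" using cosh_diff_ge_linear[of t s] s assms by simp
    show "cosh t - cosh s \<le> 2 * (t * (t - s))" using cosh_diff_le_linear[of s t] s assms by simp
  qed simp
  thus ?thesis using s by (simp add: norm_mehler_kernel powr_mult mult_ac)
qed

lemma mehler_integral_tail_bound:
  assumes t: "0 < t" "t \<le> 1" and b: "-1 < Re \<beta>" and l: "0 < l" "1 \<le> l * t"
  shows "norm (integral {t - 1/(2*l)..t} (\<lambda>s. mehler_kernel \<beta> t s * complex_of_real (cos (l * s))))
         \<le> 2 powr \<bar>Re \<beta>\<bar> / (Re \<beta> + 1) * t powr Re \<beta> * l powr (- (Re \<beta> + 1))"
proof -
  define b where "b = Re \<beta>"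
  define x0 where "x0 = t - 1/(2*l)"
  have x0: "t/2 \<le> x0" "x0 \<le> t" using t l by (auto simp: x0_def field_simps)
  have "(\<lambda>s. mehler_kernel \<beta> t s * complex_of_real (cos (l * s))) integrable_on {0..t}"
    by (intro mehler_kernel_mult_integrable[OF t(1) b, of _ 1]) (auto intro!: continuous_intros)
  hence integrable: "(\<lambda>s. mehler_kernel \<beta> t s * complex_of_real (cos (l * s))) integrable_on {x0..t}"
    using x0 t by (auto intro: integrable_on_subinterval)
  have majorant: "((\<lambda>s. 2 powr \<bar>b\<bar> * t powr b * (t - s) powr b) has_integral
             2 powr \<bar>b\<bar> * t powr b * ((t - x0) powr (b + 1) / (b + 1))) {x0..t}"
    using b x0 by (intro has_integral_mult_right has_integral_powr_to_endpoint) (auto simp: b_def)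
  have "norm (integral {x0..t} (\<lambda>s. mehler_kernel \<beta> t s * complex_of_real (cos (l * s))))
        \<le> integral {x0..t} (\<lambda>s. 2 powr \<bar>b\<bar> * t powr b * (t - s) powr b)"
  proof (rule integral_norm_bound_integral[OF integrable])
    show "norm (mehler_kernel \<beta> t s * complex_of_real (cos (l * s))) \<le> 2 powr \<bar>b\<bar> * t powr b * (t - s) powr b"
      if "s \<in> {x0..t}" for s
      using norm_mehler_kernel_near_endpoint_le[of t s \<beta>] mult_left_le[of "\<bar>cos (l * s)\<bar>"] that x0 t
      by (simp add: norm_mult b_def) (meson abs_cos_le_one norm_ge_zero order_trans)
  qed (use majorant in blast)
  also have "\<dots> = 2 powr \<bar>b\<bar> * t powr b * ((t - x0) powr (b + 1) / (b + 1))"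
    using majorant by (rule integral_unique)
  also have "\<dots> \<le> 2 powr \<bar>b\<bar> * t powr b * (l powr (- (b + 1)) / (b + 1))"
  proof -
    have "(t - x0) powr (b + 1) \<le> (1/l) powr (b + 1)"
      using l b by (intro powr_mono2) (auto simp: x0_def b_def field_simps)
    also have "(1/l) powr (b + 1) = l powr (- (b + 1))"
      by (simp only: divide_inverse mult_1_left inverse_powr powr_minus)
    finally show ?thesis using b by (intro mult_left_mono divide_right_mono) (auto simp: b_def)
  qed
  finally show ?thesis by (simp add: x0_def b_def mult_ac)
qed

lemma mehler_integral_head_bound:
  assumes b: "-1 < Re \<beta>"
  shows "\<exists>C. \<forall>t l. 0 < t \<and> t \<le> 1 \<and> 0 < l \<and> 1 \<le> l * t \<longrightarrow>
           norm (integral {0..t - 1/(2*l)} (\<lambda>s. mehler_kernel \<beta> t s * complex_of_real (cos (l * s))))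
             \<le> C * t powr Re \<beta> * l powr (- (Re \<beta> + 1))"
proof -
  obtain CV where CV: "\<And>t l x. 0 < t \<Longrightarrow> t \<le> 1 \<Longrightarrow> 0 < l \<Longrightarrow> 1 \<le> l * t \<Longrightarrow> \<bar>x\<bar> = t - 1/(2*l) \<Longrightarrow>
      norm (contour_integral (linepath (Complex x 0) (Complex x t)) (mehler_integrand \<beta> t l))
        \<le> CV * t powr Re \<beta> * l powr (- (Re \<beta> + 1))"
    using mehler_vertical_side_bound[of \<beta>] by blast
  obtain CT where CT: "\<And>t l x0. 0 < t \<Longrightarrow> t \<le> 1 \<Longrightarrow> 0 < l \<Longrightarrow> 1 \<le> l * t \<Longrightarrow> 0 \<le> x0 \<Longrightarrow> x0 < t \<Longrightarrow>
      norm (contour_integral (linepath (Complex x0 t) (Complex (-x0) t)) (mehler_integrand \<beta> t l))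
        \<le> CT * t powr Re \<beta> * l powr (- (Re \<beta> + 1))"
    using mehler_top_side_bound[OF b] by blast
  have "norm (integral {0..t - 1/(2*l)} (\<lambda>s. mehler_kernel \<beta> t s * complex_of_real (cos (l * s))))
          \<le> (CV + CT/2) * t powr Re \<beta> * l powr (- (Re \<beta> + 1))"
    if t: "0 < t" "t \<le> 1" and l: "0 < l" "1 \<le> l * t" for t l
  proof -
    define X where "X = t powr Re \<beta> * l powr (- (Re \<beta> + 1))"
    define x0 where "x0 = t - 1/(2*l)"
    have x0: "0 < x0" "x0 < t" "\<bar>x0\<bar> = t - 1/(2*l)" "\<bar>-x0\<bar> = t - 1/(2*l)"
      using t l by (auto simp: x0_def field_simps)
    have "2 * norm (integral {0..x0} (\<lambda>s. mehler_kernel \<beta> t s * complex_of_real (cos (l * s))))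
          = norm (integral {-x0..x0} (\<lambda>s. mehler_integrand \<beta> t l (complex_of_real s)))"
      using integral_mehler_integrand_symmetric[OF x0(1,2), of \<beta> l] by (simp add: norm_mult)
    also have "\<dots> \<le> CV * X + CT * X + CV * X"
      using norm_integral_real_segment_le_sides[OF t x0(1,2), of \<beta> l]
        CV[OF t l x0(3)] CV[OF t l x0(4)] CT[OF t l, of x0] x0
      by (simp add: X_def mult.assoc)
    finally show ?thesis by (simp add: x0_def X_def algebra_simps)
  qed
  thus ?thesis by blast
qed

lemma mehler_integral_abs: "mehler_integral \<beta> t \<bar>l\<bar> = mehler_integral \<beta> t l"
  by (cases "0 \<le> l") (simp_all add: mehler_integral_def)

lemma mehler_integral_oscillation_bound:
  assumes b: "-1 < Re \<beta>"
  shows "\<exists>C. \<forall>t l. 0 < t \<and> t \<le> 1 \<and> 1 \<le> \<bar>l\<bar> * t \<longrightarrow>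
           norm (mehler_integral \<beta> t l) \<le> C * t powr Re \<beta> * \<bar>l\<bar> powr (- (Re \<beta> + 1))"
proof -
  define b where "b = Re \<beta>"
  obtain CH where CH: "\<And>t l. 0 < t \<Longrightarrow> t \<le> 1 \<Longrightarrow> 0 < l \<Longrightarrow> 1 \<le> l * t \<Longrightarrow>
      norm (integral {0..t - 1/(2*l)} (\<lambda>s. mehler_kernel \<beta> t s * complex_of_real (cos (l * s))))
        \<le> CH * t powr b * l powr (- (b + 1))"
    using mehler_integral_head_bound[OF b] unfolding b_def by blast
  define C where "C = CH + 2 powr \<bar>b\<bar> / (b + 1)"
  have "norm (mehler_integral \<beta> t l) \<le> C * t powr b * l powr (- (b + 1))"
    if t: "0 < t" "t \<le> 1" and l: "0 < l" "1 \<le> l * t" for t l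
  proof -
    define x0 where "x0 = t - 1/(2*l)"
    define f where "f = (\<lambda>s. mehler_kernel \<beta> t s * complex_of_real (cos (l * s)))"
    have "f integrable_on {0..t}"
      unfolding f_def by (intro mehler_kernel_mult_integrable[OF t(1) b, of _ 1]) (auto intro!: continuous_intros)
    hence "mehler_integral \<beta> t l = integral {0..x0} f + integral {x0..t} f"
      unfolding mehler_integral_def f_def[symmetric] using t l
      by (intro Henstock_Kurzweil_Integration.integral_combine[symmetric]) (auto simp: x0_def field_simps)
    thus ?thesis
      using CH[OF t l] mehler_integral_tail_bound[OF t b l]
        norm_triangle_ineq[of "integral {0..x0} f" "integral {x0..t} f"]
      by (simp add: C_def f_def x0_def b_def algebra_simps)
  qed
  note positive = this
  have "norm (mehler_integral \<beta> t l) \<le> C * t powr Re \<beta> * \<bar>l\<bar> powr (- (Re \<beta> + 1))"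
    if "0 < t" "t \<le> 1" "1 \<le> \<bar>l\<bar> * t" for t l
  proof -
    have "0 < \<bar>l\<bar>" using that by (cases "l = 0") auto
    thus ?thesis using positive[of t "\<bar>l\<bar>"] that by (simp add: mehler_integral_abs b_def)
  qed
  thus ?thesis by blast
qed

section \<open>The prefactor\<close>

definition mehler_exponent :: "nat \<Rightarrow> complex \<Rightarrow> complex" where
  "mehler_exponent n \<alpha> = \<alpha> + (of_nat n - 3) / 2"

definition mult_m_prefactor :: "nat \<Rightarrow> complex \<Rightarrow> real \<Rightarrow> complex" where
  "mult_m_prefactor n \<alpha> t = 2 powr ((of_nat n - 2) / 2 + \<alpha>) * Gamma (of_nat n / 2)
     * exp (\<alpha> * of_real t) / (complex_of_real (exp t - 1)) powr (2 * \<alpha>)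
     * (complex_of_real (sinh t)) powr ((2 - of_nat n) / 2 + \<alpha>)
     * (complex_of_real (sqrt (2 / pi)) / Gamma (1/2 - ((2 - of_nat n) / 2 - \<alpha>))
        * (complex_of_real (sinh t)) powr ((2 - of_nat n) / 2 - \<alpha>))"

definition prefactor_const :: "nat \<Rightarrow> complex \<Rightarrow> real" where
  "prefactor_const n \<alpha> = 2 powr ((real n - 2) / 2 + Re \<alpha>) * norm (Gamma (of_nat n / 2 :: complex))
     * sqrt (2 / pi) / norm (Gamma (1/2 - ((2 - of_nat n) / 2 - \<alpha>)))"

definition prefactor_weight :: "real \<Rightarrow> real \<Rightarrow> real \<Rightarrow> real" where
  "prefactor_weight b d t = (2 * sinh (t/2)) powr (- 1 - 2 * b) * cosh (t/2) powr (2 - d)"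

lemma Re_mehler_exponent: "Re (mehler_exponent n \<alpha>) = Re \<alpha> + (real n - 3) / 2"
  by (simp add: mehler_exponent_def)

lemma Re_mehler_exponent_gt: "(1 - real n) / 2 < Re \<alpha> \<Longrightarrow> -1 < Re (mehler_exponent n \<alpha>)"
  by (simp add: Re_mehler_exponent field_simps)

lemma mult_m_eq_prefactor_mehler_integral:
  "mult_m n \<alpha> t lam = mult_m_prefactor n \<alpha> t * mehler_integral (mehler_exponent n \<alpha>) t lam"
proof -
  have exponent: "- ((2 - of_nat n) / 2 - \<alpha>) - 1/2 = mehler_exponent n \<alpha>"
    by (simp add: mehler_exponent_def field_simps)
  show ?thesis
    unfolding mult_m_def legendreP_cosh_def mult_m_prefactor_def mehler_integral_def mehler_kernel_def
    by (simp only: exponent mult.assoc)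
qed

lemma exp_sinh_weight_half_angle:
  fixes A d t :: real
  assumes "0 < t"
  shows "exp (A * t) / (exp t - 1) powr (2 * A) * sinh t powr (2 - d)
         = (2 * sinh (t/2)) powr (2 - d - 2 * A) * cosh (t/2) powr (2 - d)"
proof -
  define s c where "s = sinh (t/2)" and "c = cosh (t/2)"
  have s: "0 < s" using assms by (simp add: s_def)
  have c: "0 < c" by (simp add: c_def)
  have "exp t - 1 = 2 * exp (t/2) * s"
    by (simp add: s_def sinh_def field_simps flip: exp_add)
  hence ln_exp: "ln (exp t - 1) = ln 2 + t/2 + ln s" using s by (simp add: ln_mult)
  have "sinh t = 2 * s * c" using sinh_double[of "t/2"] by (simp add: s_def c_def)
  hence ln_sinh: "ln (sinh t) = ln 2 + ln s + ln c" using s c by (simp add: ln_mult)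
  have "exp (A * t) / (exp t - 1) powr (2 * A) * sinh t powr (2 - d)
        = exp (A * t - 2 * A * ln (exp t - 1) + (2 - d) * ln (sinh t))"
    using assms by (simp add: powr_def exp_diff exp_add)
  also have "\<dots> = exp ((2 - d - 2 * A) * ln (2 * s) + (2 - d) * ln c)"
    unfolding ln_exp ln_sinh using s by (simp add: ln_mult algebra_simps)
  also have "\<dots> = (2 * s) powr (2 - d - 2 * A) * c powr (2 - d)"
    using s c by (simp add: powr_def exp_add)
  finally show ?thesis by (simp add: s_def c_def)
qed

lemma prefactor_const_nonneg: "0 \<le> prefactor_const n \<alpha>"
  by (simp add: prefactor_const_def)

lemma prefactor_weight_nonneg: "0 \<le> prefactor_weight b d t"
  by (simp add: prefactor_weight_def)

lemma norm_mult_m_prefactor: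
  assumes "0 < t"
  shows "norm (mult_m_prefactor n \<alpha> t)
           = prefactor_const n \<alpha> * prefactor_weight (Re (mehler_exponent n \<alpha>)) (real n) t"
proof -
  have e: "0 \<le> exp t - 1" and s: "0 \<le> sinh t" using assms by auto
  have "norm (2 powr ((of_nat n - 2) / 2 + \<alpha>) :: complex) = 2 powr ((real n - 2) / 2 + Re \<alpha>)"
    by (subst norm_powr_real_powr) auto
  moreover have "norm (exp (\<alpha> * of_real t)) = exp (Re \<alpha> * t)" by (simp add: norm_exp_eq_Re)
  moreover have "norm (complex_of_real (exp t - 1) powr (2 * \<alpha>)) = (exp t - 1) powr (2 * Re \<alpha>)"
    using e by (subst norm_powr_real_powr) auto
  moreover have "norm (complex_of_real (sinh t) powr ((2 - of_nat n) / 2 + \<alpha>))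
                 * norm (complex_of_real (sinh t) powr ((2 - of_nat n) / 2 - \<alpha>)) = sinh t powr (2 - real n)"
    using s by (simp add: norm_powr_real_powr flip: powr_add)
  ultimately have "norm (mult_m_prefactor n \<alpha> t)
        = prefactor_const n \<alpha> * (exp (Re \<alpha> * t) / (exp t - 1) powr (2 * Re \<alpha>) * sinh t powr (2 - real n))"
    unfolding mult_m_prefactor_def prefactor_const_def norm_mult norm_divide by (simp add: field_simps)
  also have "- 1 - 2 * Re (mehler_exponent n \<alpha>) = 2 - real n - 2 * Re \<alpha>"
    by (simp add: Re_mehler_exponent field_simps)
  hence "exp (Re \<alpha> * t) / (exp t - 1) powr (2 * Re \<alpha>) * sinh t powr (2 - real n)
         = prefactor_weight (Re (mehler_exponent n \<alpha>)) (real n) t"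
    unfolding prefactor_weight_def by (simp only: exp_sinh_weight_half_angle[OF assms])
  finally show ?thesis .
qed

lemma norm_mult_m:
  assumes "0 < t"
  shows "norm (mult_m n \<alpha> t lam) = prefactor_const n \<alpha> * prefactor_weight (Re (mehler_exponent n \<alpha>)) (real n) t
           * norm (mehler_integral (mehler_exponent n \<alpha>) t lam)"
  using norm_mult_m_prefactor[OF assms]
  by (simp add: mult_m_eq_prefactor_mehler_integral norm_mult)

lemma cosh_half_powr_le:
  fixes d t :: real
  assumes "2 \<le> d"
  shows "cosh (t/2) powr (2 - d) \<le> 2 powr (d - 2) * exp ((2 - d) * (t/2))"
proof -
  have "exp (t/2) / 2 \<le> cosh (t/2)" by (simp add: cosh_def)
  hence "cosh (t/2) powr (2 - d) \<le> (exp (t/2) / 2) powr (2 - d)"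
    using assms by (intro powr_mono2') auto
  also have "\<dots> = 2 powr (d - 2) * exp ((2 - d) * (t/2))"
    by (simp add: powr_def ln_div flip: exp_add) (simp add: algebra_simps)
  finally show ?thesis .
qed

lemma div_twice_sinh_half_le:
  assumes "0 < (t::real)"
  shows "t / (2 * sinh (t/2)) \<le> (1 + t) * exp (- (t/2))"
proof -
  have "(1 + t) * exp (- t) \<le> 1" using exp_ge_add_one_self[of t] by (simp add: exp_minus field_simps)
  moreover have "2 * sinh (t/2) * ((1 + t) * exp (- (t/2))) = (1 + t) * (1 - exp (- t))"
    by (simp add: sinh_def field_simps flip: exp_add)
  ultimately have "t \<le> 2 * sinh (t/2) * ((1 + t) * exp (- (t/2)))" by (simp add: algebra_simps)
  thus ?thesis using assms by (simp add: divide_le_eq mult.commute)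
qed

lemma prefactor_weight_mult_kernel_mass_le:
  assumes "0 < t" "2 \<le> d"
  shows "prefactor_weight b d t * ((cosh t - 1) powr b * t)
           \<le> 2 powr (d - 2 - b) * ((1 + t) * exp (- ((d - 1) / 2) * t))"
proof -
  define s c where "s = 2 * sinh (t/2)" and "c = cosh (t/2)"
  have s: "0 < s" using assms by (simp add: s_def)
  have "cosh t - 1 = s powr 2 / 2"
    using cosh_double[of "t/2"] cosh_square_eq[of "t/2"] s
    by (simp add: s_def power2_eq_square powr_numeral)
  hence "(cosh t - 1) powr b = (s powr 2 / 2) powr b" by (simp only:)
  also have "\<dots> = (s powr 2) powr b / 2 powr b" by (rule powr_divide)
  also have "\<dots> = s powr (2 * b) * 2 powr (- b)" by (simp add: powr_powr powr_minus divide_inverse)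
  finally have mass: "(cosh t - 1) powr b = s powr (2 * b) * 2 powr (- b)" .
  have "s powr (- 1 - 2 * b) * s powr (2 * b) = s powr (- 1)" by (simp flip: powr_add)
  also have "\<dots> = 1 / s" using s by (simp add: powr_minus divide_inverse)
  finally have cancel: "s powr (- 1 - 2 * b) * s powr (2 * b) = 1 / s" .
  have "prefactor_weight b d t * ((cosh t - 1) powr b * t)
        = (s powr (- 1 - 2 * b) * s powr (2 * b)) * (2 powr (- b) * c powr (2 - d) * t)"
    unfolding prefactor_weight_def mass by (simp add: s_def c_def mult_ac)
  also have "\<dots> = 2 powr (- b) * c powr (2 - d) * (t / s)" unfolding cancel by simp
  also have "\<dots> \<le> 2 powr (- b) * (2 powr (d - 2) * exp ((2 - d) * (t/2))) * ((1 + t) * exp (- (t/2)))"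
    using cosh_half_powr_le[OF assms(2), of t] div_twice_sinh_half_le[OF assms(1)] assms s
    by (intro mult_mono) (auto simp: c_def s_def)
  also have "\<dots> = (2 powr (- b) * 2 powr (d - 2)) * ((1 + t) * (exp ((2 - d) * (t/2)) * exp (- (t/2))))"
    by (simp only: mult.assoc mult.commute mult.left_commute)
  also have "2 powr (- b) * 2 powr (d - 2) = 2 powr (d - 2 - b)" by (simp flip: powr_add)
  also have "exp ((2 - d) * (t/2)) * exp (- (t/2)) = exp (- ((d - 1) / 2) * t)"
    by (simp flip: exp_add add: field_simps)
  finally show ?thesis .
qed

lemma prefactor_weight_le_small:
  assumes "0 < t" "t \<le> 1" "2 \<le> d"
  shows "prefactor_weight b d t \<le> 2 powr \<bar>1 + 2 * b\<bar> * t powr (- 1 - 2 * b)"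
proof -
  have "\<bar>- 1 - 2 * b\<bar> = \<bar>1 + 2 * b\<bar>" by linarith
  moreover have "(2 * sinh (t/2)) powr (- 1 - 2 * b) \<le> 2 powr \<bar>- 1 - 2 * b\<bar> * t powr (- 1 - 2 * b)"
    using sinh_ge_self[of "t/2"] sinh_le_twice_self[of "t/2"] assms
    by (intro powr_le_of_ratio_bounded) auto
  moreover have "cosh (t/2) powr (2 - d) \<le> 1"
    using powr_mono2'[of "2 - d" 1 "cosh (t/2)"] cosh_real_ge_1[of "t/2"] assms by simp
  ultimately show ?thesis
    unfolding prefactor_weight_def using mult_mono[of _ _ "cosh (t/2) powr (2 - d)" 1] by fastforce
qed

section \<open>The three estimates\<close>

lemma le_mult_const_mono: "x \<le> a * y \<Longrightarrow> a \<le> b \<Longrightarrow> 0 \<le> y \<Longrightarrow> x \<le> b * (y::real)"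
  by (meson mult_right_mono order_trans)

lemma weighted_kernel_mass_le:
  assumes "2 \<le> n" "(1 - real n) / 2 < Re \<alpha>"
  shows "\<exists>C\<ge>0. \<forall>t>0. prefactor_const n \<alpha> * prefactor_weight (Re (mehler_exponent n \<alpha>)) (real n) t
                   * kernel_mass (mehler_exponent n \<alpha>) t
                 \<le> C * ((1 + t) * exp (- ((real n - 1) / 2) * t))"
proof -
  define b where "b = Re (mehler_exponent n \<alpha>)"
  have b: "-1 < b" using Re_mehler_exponent_gt[OF assms(2)] by (simp add: b_def)
  define C where "C = prefactor_const n \<alpha> * 2 powr (real n - 2 - b) / (min b 0 + 1)"
  have "prefactor_const n \<alpha> * prefactor_weight b (real n) t * kernel_mass (mehler_exponent n \<alpha>) t
          \<le> C * ((1 + t) * exp (- ((real n - 1) / 2) * t))" if t: "0 < t" for t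
  proof -
    have "prefactor_const n \<alpha> * prefactor_weight b (real n) t * kernel_mass (mehler_exponent n \<alpha>) t
          = prefactor_const n \<alpha> * (prefactor_weight b (real n) t * ((cosh t - 1) powr b * t)) / (min b 0 + 1)"
      by (simp add: kernel_mass_def b_def)
    also have "\<dots> \<le> prefactor_const n \<alpha> * (2 powr (real n - 2 - b) * ((1 + t) * exp (- ((real n - 1) / 2) * t)))
                    / (min b 0 + 1)"
      using prefactor_weight_mult_kernel_mass_le[OF t, of "real n" b] assms b prefactor_const_nonneg
      by (intro divide_right_mono mult_left_mono) auto
    finally show ?thesis by (simp add: C_def)
  qed
  moreover have "0 \<le> C" using b prefactor_const_nonneg by (simp add: C_def)
  ultimately show ?thesis by (auto simp: b_def)
qed

lemma mult_m_uniform_bound: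
  assumes "2 \<le> n" "(1 - real n) / 2 < Re \<alpha>"
  shows "\<exists>C. \<forall>lam t. 0 < t \<longrightarrow>
           norm (mult_m n \<alpha> t lam) \<le> C * ((1 + t) * exp (- ((real n - 1) / 2) * t))"
proof -
  obtain C where C: "\<And>t. 0 < t \<Longrightarrow>
      prefactor_const n \<alpha> * prefactor_weight (Re (mehler_exponent n \<alpha>)) (real n) t
        * kernel_mass (mehler_exponent n \<alpha>) t \<le> C * ((1 + t) * exp (- ((real n - 1) / 2) * t))"
    using weighted_kernel_mass_le[OF assms] by blast
  have "norm (mult_m n \<alpha> t lam) \<le> C * ((1 + t) * exp (- ((real n - 1) / 2) * t))" if t: "0 < t" for t lam
    unfolding norm_mult_m[OF t]
    using mehler_integral_norm_le[OF t Re_mehler_exponent_gt[OF assms(2)], of lam]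
      prefactor_const_nonneg prefactor_weight_nonneg
    by (intro order_trans[OF mult_left_mono C[OF t]]) auto
  thus ?thesis by blast
qed

lemma mult_m_has_vector_derivative:
  assumes "0 < t" "(1 - real n) / 2 < Re \<alpha>"
  shows "(mult_m n \<alpha> t has_vector_derivative
            mult_m_prefactor n \<alpha> t * mehler_integral_deriv (mehler_exponent n \<alpha>) t lam) (at lam)"
  unfolding mult_m_eq_prefactor_mehler_integral
  using assms Re_mehler_exponent_gt[OF assms(2)]
  by (intro has_vector_derivative_mult_right mehler_integral_has_vector_derivative)

lemma mult_m_derivative_bound:
  assumes "2 \<le> n" "(1 - real n) / 2 < Re \<alpha>"
  shows "\<exists>C. \<forall>lam t. 0 < t \<and> t \<le> 1 \<longrightarrow> norm (vector_derivative (mult_m n \<alpha> t) (at lam)) \<le> C * t"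
proof -
  obtain C where "0 \<le> C" and C: "\<And>t. 0 < t \<Longrightarrow>
      prefactor_const n \<alpha> * prefactor_weight (Re (mehler_exponent n \<alpha>)) (real n) t
        * kernel_mass (mehler_exponent n \<alpha>) t \<le> C * ((1 + t) * exp (- ((real n - 1) / 2) * t))"
    using weighted_kernel_mass_le[OF assms] by blast
  have "norm (vector_derivative (mult_m n \<alpha> t) (at lam)) \<le> (2 * C) * t" if t: "0 < t" "t \<le> 1" for t lam
  proof -
    let ?W = "prefactor_const n \<alpha> * prefactor_weight (Re (mehler_exponent n \<alpha>)) (real n) t"
    have "norm (vector_derivative (mult_m n \<alpha> t) (at lam))
          = ?W * norm (mehler_integral_deriv (mehler_exponent n \<alpha>) t lam)"
      using vector_derivative_at[OF mult_m_has_vector_derivative[OF t(1) assms(2)]]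
      by (simp add: norm_mult norm_mult_m_prefactor[OF t(1)])
    also have "\<dots> \<le> ?W * (t * kernel_mass (mehler_exponent n \<alpha>) t)"
      using mehler_integral_deriv_norm_le[OF t(1) Re_mehler_exponent_gt[OF assms(2)]]
        prefactor_const_nonneg prefactor_weight_nonneg
      by (intro mult_left_mono mult_nonneg_nonneg) auto
    also have "\<dots> = t * (?W * kernel_mass (mehler_exponent n \<alpha>) t)" by (simp add: mult_ac)
    also have "\<dots> \<le> t * (C * ((1 + t) * exp (- ((real n - 1) / 2) * t)))"
      using C[OF t(1)] t by (intro mult_left_mono) auto
    also have "\<dots> \<le> t * (C * 2)"
    proof -
      have "(1 + t) * exp (- ((real n - 1) / 2) * t) \<le> 2 * 1"
        using t assms by (intro mult_mono) auto
      thus ?thesis using t \<open>0 \<le> C\<close> by (intro mult_left_mono) auto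
    qed
    finally show ?thesis by (simp add: mult_ac)
  qed
  thus ?thesis by blast
qed

lemma mult_m_oscillation_bound:
  assumes "2 \<le> n" "(1 - real n) / 2 < Re \<alpha>"
  shows "\<exists>C. \<forall>lam t. 0 < t \<and> t \<le> 1 \<and> 1 \<le> \<bar>lam\<bar> * t \<longrightarrow>
           norm (mult_m n \<alpha> t lam) \<le> C * (\<bar>lam\<bar> * t) powr (- (Re \<alpha> + (real n - 1) / 2))"
proof -
  define \<beta> where "\<beta> = mehler_exponent n \<alpha>"
  define b where "b = Re \<beta>"
  have b: "-1 < b" using Re_mehler_exponent_gt[OF assms(2)] by (simp add: b_def \<beta>_def)
  have exponent: "b + 1 = Re \<alpha> + (real n - 1) / 2"
    by (simp add: b_def \<beta>_def Re_mehler_exponent field_simps)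
  obtain D where D: "\<And>t l. 0 < t \<Longrightarrow> t \<le> 1 \<Longrightarrow> 1 \<le> \<bar>l\<bar> * t \<Longrightarrow>
      norm (mehler_integral \<beta> t l) \<le> D * t powr b * \<bar>l\<bar> powr (- (b + 1))"
    using mehler_integral_oscillation_bound[of \<beta>] b unfolding b_def by blast
  define C where "C = prefactor_const n \<alpha> * 2 powr \<bar>1 + 2 * b\<bar> * D"
  have "norm (mult_m n \<alpha> t lam) \<le> C * (\<bar>lam\<bar> * t) powr (- (b + 1))"
    if t: "0 < t" "t \<le> 1" and l: "1 \<le> \<bar>lam\<bar> * t" for t lam
  proof -
    have "norm (mult_m n \<alpha> t lam)
          \<le> prefactor_const n \<alpha> * (2 powr \<bar>1 + 2 * b\<bar> * t powr (- 1 - 2 * b))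
              * (D * t powr b * \<bar>lam\<bar> powr (- (b + 1)))"
      unfolding norm_mult_m[OF t(1)] \<beta>_def[symmetric] b_def[symmetric]
    proof (rule mult_mono[OF _ D[OF t l]])
      show "prefactor_const n \<alpha> * prefactor_weight b (real n) t
            \<le> prefactor_const n \<alpha> * (2 powr \<bar>1 + 2 * b\<bar> * t powr (- 1 - 2 * b))"
        using prefactor_weight_le_small[OF t, of "real n" b] assms prefactor_const_nonneg
        by (intro mult_left_mono) auto
    qed (use prefactor_const_nonneg in auto)
    also have "\<dots> = C * ((t powr (- 1 - 2 * b) * t powr b) * \<bar>lam\<bar> powr (- (b + 1)))"
      by (simp add: C_def mult_ac)
    also have "t powr (- 1 - 2 * b) * t powr b = t powr (- (b + 1))" by (simp flip: powr_add)
    also have "t powr (- (b + 1)) * \<bar>lam\<bar> powr (- (b + 1)) = (\<bar>lam\<bar> * t) powr (- (b + 1))"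
      by (simp add: powr_mult mult.commute)
    finally show ?thesis .
  qed
  thus ?thesis unfolding exponent by blast
qed

theorem lemma2p1:
  fixes n :: nat and \<alpha> :: complex
  assumes "n \<ge> 2" and "Re \<alpha> > (1 - real n) / 2"
  shows "\<exists>C>0.
     (\<forall>lam t. t > 0 \<longrightarrow> norm (mult_m n \<alpha> t lam) \<le> C * (1 + t) * exp (- ((real n - 1) / 2) * t))
   \<and> (\<forall>lam t. 0 < t \<and> t \<le> 1 \<longrightarrow>
         (\<lambda>l. mult_m n \<alpha> t l) differentiable (at lam)
       \<and> norm (vector_derivative (\<lambda>l. mult_m n \<alpha> t l) (at lam)) \<le> C * t)
   \<and> (\<forall>lam t. 0 < t \<and> t \<le> 1 \<and> \<bar>lam\<bar> * t \<ge> 1 \<longrightarrow>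
         norm (mult_m n \<alpha> t lam) \<le> C * (\<bar>lam\<bar> * t) powr (- (Re \<alpha> + (real n - 1) / 2)))"
proof -
  obtain C1 where C1: "\<And>lam t. 0 < t \<Longrightarrow>
      norm (mult_m n \<alpha> t lam) \<le> C1 * ((1 + t) * exp (- ((real n - 1) / 2) * t))"
    using mult_m_uniform_bound[OF assms] by blast
  obtain C2 where C2: "\<And>lam t. 0 < t \<and> t \<le> 1 \<Longrightarrow> norm (vector_derivative (mult_m n \<alpha> t) (at lam)) \<le> C2 * t"
    using mult_m_derivative_bound[OF assms] by blast
  obtain C3 where C3: "\<And>lam t. 0 < t \<and> t \<le> 1 \<and> 1 \<le> \<bar>lam\<bar> * t \<Longrightarrow>
      norm (mult_m n \<alpha> t lam) \<le> C3 * (\<bar>lam\<bar> * t) powr (- (Re \<alpha> + (real n - 1) / 2))"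
    using mult_m_oscillation_bound[OF assms] by blast
  define C where "C = max 1 (max C1 (max C2 C3))"
  have C: "0 < C" "C1 \<le> C" "C2 \<le> C" "C3 \<le> C" by (auto simp: C_def)
  show ?thesis
  proof (intro exI[of _ C] conjI allI impI C(1))
    fix lam t :: real
    show "norm (mult_m n \<alpha> t lam) \<le> C * (1 + t) * exp (- ((real n - 1) / 2) * t)" if "t > 0"
      using le_mult_const_mono[OF C1[OF that] C(2)] that by (simp add: mult.assoc)
    show "(\<lambda>l. mult_m n \<alpha> t l) differentiable (at lam)" if "0 < t \<and> t \<le> 1"
      using mult_m_has_vector_derivative[OF _ assms(2)] that by (blast intro: differentiableI_vector)
    show "norm (vector_derivative (\<lambda>l. mult_m n \<alpha> t l) (at lam)) \<le> C * t" if "0 < t \<and> t \<le> 1"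
      using le_mult_const_mono[OF C2[OF that] C(3)] that by simp
    show "norm (mult_m n \<alpha> t lam) \<le> C * (\<bar>lam\<bar> * t) powr (- (Re \<alpha> + (real n - 1) / 2))"
      if "0 < t \<and> t \<le> 1 \<and> \<bar>lam\<bar> * t \<ge> 1"
      using le_mult_const_mono[OF C3[OF that] C(4)] by simp
  qed
qed

end
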